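(* Let $\alpha\in[0,1)$. Suppose $K\colon\Delta\to\mathbb R$ is bounded everywhere, nonzero on the diagonal $\{(x,x);0\leq x\leq1\}$, and Lipschitz continuous in some neighborhood of the diagonal. If $f\in L^1([0,1])$ satisfies $I^\alpha_Kf(x)=0$ for almost all $x\geq r$ for some $r\in[0,1)$, then $f(x)=0$ for almost all $x\geq r$. In particular, $I^\alpha_K\colon L^1([0,1])\to L^1([0,1])$ is injective.
   Context: $\Delta=\{(x,y);0\leq x\leq y\leq1\}$. $I^\alpha_Kf(x)=\int_x^1(y-x)^{-\alpha}K(x,y)f(y)\,dy$ for $x\in[0,1)$ and $I^\alpha_Kf(1)=0$. *)

theory Defs
  imports "HOL-Analysis.Analysis"
begin

definition Delta :: "(real \<times> real) set" where
  "Delta = {(x, y). 0 \<le> x \<and> x \<le> y \<and> y \<le> 1}"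

definition diagonal01 :: "(real \<times> real) set" where
  "diagonal01 = {(x, x) | x. 0 \<le> x \<and> x \<le> 1}"

definition IK :: "real \<Rightarrow> (real \<times> real \<Rightarrow> real) \<Rightarrow> (real \<Rightarrow> real) \<Rightarrow> real \<Rightarrow> real" where
  "IK \<alpha> K f x = (if x < 1
      then (LINT y:{x..1}|lebesgue. (y - x) powr (- \<alpha>) * K (x, y) * f y)
      else 0)"

end

theory Submission
  imports Defs
begin

text \<open>By linearity it suffices to show that \<open>I\<^sup>\<alpha>\<^sub>K h = 0\<close> almost everywhere on \<open>[r, 1]\<close> forces
  \<open>h = 0\<close> there. Working from the right in steps of a fixed small length, once \<open>h\<close> vanishes on \<open>[s, 1]\<close>
  the equation on \<open>[a, s]\<close> is a Volterra equation \<open>\<integral>\<^sub>t\<^sup>s M t y h y dy = 0\<close>. For \<open>\<alpha> = 0\<close> the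
  kernel \<open>M = K\<close> is Lipschitz near the diagonal and bounded away from zero on it, and on a
  short interval Lebesgue differentiation turns the equation into a contraction estimate for
  \<open>\<parallel>h\<parallel>\<^sub>1\<close>. For \<open>\<alpha> > 0\<close> Abel's trick produces an equation of the same kind with the kernel
  \<open>M t y = \<integral>\<^sub>0\<^sup>1 u powr (\<alpha> - 1) (1 - u) powr (- \<alpha>) K (t + (y - t) u, y) du\<close>, which is again
  Lipschitz and equals \<open>B(\<alpha>, 1 - \<alpha>) K (t, t)\<close> on the diagonal.\<close>

lemma continuous_times_absolutely_integrable_on_subinterval:
  fixes m f :: "real \<Rightarrow> real"
  assumes fi: "f absolutely_integrable_on {a..s}" and m: "continuous_on {u..v} m"
    and uv: "a \<le> u" "v \<le> s"
  shows "(\<lambda>y. m y * f y) integrable_on {u..v}"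
proof -
  have "f absolutely_integrable_on {u..v}"
    by (rule absolutely_integrable_on_subinterval[OF fi]) (use uv in auto)
  with m have "(\<lambda>y. m y * f y) absolutely_integrable_on {u..v}"
    by (intro absolutely_integrable_bounded_measurable_product_real)
      (auto intro: continuous_imp_measurable_on_sets_lebesgue compact_continuous_image compact_imp_bounded)
  then show ?thesis using set_lebesgue_integral_eq_integral(1) by blast
qed

lemma abs_integrable_on_subinterval:
  fixes f :: "real \<Rightarrow> real"
  assumes "f absolutely_integrable_on {a..s}" "a \<le> u" "v \<le> s"
  shows "(\<lambda>y. \<bar>f y\<bar>) integrable_on {u..v}"
proof -
  have "(\<lambda>y. norm (f y)) integrable_on {a..s}"
    using assms(1) absolutely_integrable_on_def by blast
  then have "(\<lambda>y. \<bar>f y\<bar>) integrable_on {a..s}"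
    by (simp add: real_norm_def)
  then show ?thesis
    by (rule integrable_on_subinterval) (use assms in auto)
qed

lemma integral_abs_mono_interval:
  fixes f :: "real \<Rightarrow> real"
  assumes "f absolutely_integrable_on {a..s}" "a \<le> u" "v \<le> s"
  shows "integral {u..v} (\<lambda>y. \<bar>f y\<bar>) \<le> integral {a..s} (\<lambda>y. \<bar>f y\<bar>)"
  using assms by (intro integral_subset_le abs_integrable_on_subinterval) auto

lemma abs_integral_le_integral:
  fixes f g :: "real \<Rightarrow> real"
  assumes "f integrable_on S" "g integrable_on S" "\<And>x. x \<in> S \<Longrightarrow> \<bar>f x\<bar> \<le> g x"
  shows "\<bar>integral S f\<bar> \<le> integral S g"
  using integral_norm_bound_integral[of f S g] assms by (simp add: real_norm_def)

lemma abs_integral_times_le: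
  fixes f g :: "real \<Rightarrow> real"
  assumes fi: "f absolutely_integrable_on {a..s}" and uv: "a \<le> u" "v \<le> s"
    and gi: "(\<lambda>y. g y * f y) integrable_on {u..v}"
    and gB: "\<And>y. y \<in> {u..v} \<Longrightarrow> \<bar>g y\<bar> \<le> \<epsilon>" and \<epsilon>: "0 \<le> \<epsilon>"
  shows "\<bar>integral {u..v} (\<lambda>y. g y * f y)\<bar> \<le> \<epsilon> * integral {a..s} (\<lambda>y. \<bar>f y\<bar>)"
proof -
  have "\<bar>integral {u..v} (\<lambda>y. g y * f y)\<bar> \<le> integral {u..v} (\<lambda>y. \<epsilon> * \<bar>f y\<bar>)"
  proof (rule abs_integral_le_integral[OF gi])
    show "(\<lambda>y. \<epsilon> * \<bar>f y\<bar>) integrable_on {u..v}"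
      using integrable_cmul[OF abs_integrable_on_subinterval[OF fi uv]] by simp
    show "\<bar>g y * f y\<bar> \<le> \<epsilon> * \<bar>f y\<bar>" if "y \<in> {u..v}" for y
      using mult_right_mono[OF gB[OF that] abs_ge_zero[of "f y"]] by (simp add: abs_mult)
  qed
  also have "\<dots> \<le> \<epsilon> * integral {a..s} (\<lambda>y. \<bar>f y\<bar>)"
    using mult_left_mono[OF integral_abs_mono_interval[OF fi uv] \<epsilon>] by simp
  finally show ?thesis .
qed

lemma integral_abs_le_of_negligible_exceeding:
  fixes f :: "real \<Rightarrow> real"
  assumes fi: "(\<lambda>y. \<bar>f y\<bar>) integrable_on {a..s}" and as: "a \<le> s" and \<kappa>: "0 \<le> \<kappa>"
    and neg: "negligible {x \<in> {a..s}. \<kappa> < \<bar>f x\<bar>}"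
  shows "integral {a..s} (\<lambda>y. \<bar>f y\<bar>) \<le> \<kappa> * (s - a)"
proof -
  define f1 where "f1 = (\<lambda>y. if \<kappa> < \<bar>f y\<bar> then 0 else \<bar>f y\<bar>)"
  have spike: "f1 y = \<bar>f y\<bar>" if "y \<in> {a..s} - {x \<in> {a..s}. \<kappa> < \<bar>f x\<bar>}" for y
    using that by (auto simp: f1_def)
  have "f1 integrable_on {a..s}"
    by (rule integrable_spike[OF fi neg]) (use spike in auto)
  have "integral {a..s} (\<lambda>y. \<bar>f y\<bar>) = integral {a..s} f1"
    by (rule integral_spike[OF neg]) (use spike in auto)
  also have "\<dots> \<le> integral {a..s} (\<lambda>y. \<kappa>)"
    by (rule integral_le[OF \<open>f1 integrable_on {a..s}\<close>]) (use \<kappa> in \<open>auto simp: f1_def\<close>)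
  also have "\<dots> = \<kappa> * (s - a)" using as by simp
  finally show ?thesis .
qed

lemma integral_eq_of_negligible_tail:
  fixes g h :: "real \<Rightarrow> real"
  assumes "negligible {y \<in> {s..1}. h y \<noteq> 0}" "x \<le> s" "s \<le> 1"
  shows "integral {x..s} (\<lambda>y. g y * h y) = integral {x..1} (\<lambda>y. g y * h y)"
proof -
  have "integral {x..1} (\<lambda>y. g y * h y) = integral {x..1} (\<lambda>y. if y \<in> {..s} then g y * h y else 0)"
    by (rule integral_spike[OF assms(1)]) auto
  also have "\<dots> = integral ({..s} \<inter> {x..1}) (\<lambda>y. g y * h y)"
    by (rule Henstock_Kurzweil_Integration.integral_restrict_Int)
  also have "{..s} \<inter> {x..1} = {x..s}" using assms by auto
  finally show ?thesis by simp
qed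

lemma right_averages_converge_ae:
  fixes f :: "real \<Rightarrow> real"
  assumes "f integrable_on {a..s}"
  obtains N where "negligible N"
    "\<And>x e. x \<in> {a..s} - N \<Longrightarrow> 0 < e \<Longrightarrow> \<exists>d>0. \<forall>t'. x < t' \<and> t' < x + d \<and> t' \<le> s \<longrightarrow>
        \<bar>integral {x..t'} f / (t' - x) - f x\<bar> < e"
proof -
  define f0 where "f0 = (\<lambda>x. if x \<in> {a..s} then f x else 0)"
  have "f0 integrable_on UNIV"
    unfolding f0_def using integrable_restrict_UNIV assms by blast
  then have "f0 integrable_on cbox u v" for u v
    by (rule integrable_on_subcbox) auto
  then obtain N where N: "negligible N"
    and avg: "\<And>x e. \<lbrakk>x \<notin> N; 0 < e\<rbrakk> \<Longrightarrow> \<exists>d>0. \<forall>h. 0 < h \<and> h < d \<longrightarrow>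
        norm (integral (cbox x (x + h *\<^sub>R One)) f0 /\<^sub>R h ^ DIM(real) - f0 x) < e"
    using integrable_ccontinuous_explicit[of f0] by blast
  have "\<exists>d>0. \<forall>t'. x < t' \<and> t' < x + d \<and> t' \<le> s \<longrightarrow> \<bar>integral {x..t'} f / (t' - x) - f x\<bar> < e"
    if x: "x \<in> {a..s} - N" and e: "0 < e" for x e
  proof -
    obtain d where "d > 0" and d: "\<And>h. 0 < h \<Longrightarrow> h < d \<Longrightarrow>
        norm (integral (cbox x (x + h *\<^sub>R One)) f0 /\<^sub>R h ^ DIM(real) - f0 x) < e"
      using avg[OF _ e] x by blast
    have "\<bar>integral {x..t'} f / (t' - x) - f x\<bar> < e" if t': "x < t'" "t' < x + d" "t' \<le> s" for t'
    proof -
      have "integral {x..t'} f0 = integral {x..t'} f"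
        by (rule integral_cong) (use x t' in \<open>auto simp: f0_def\<close>)
      moreover have "norm (integral {x..t'} f0 /\<^sub>R (t' - x) - f0 x) < e"
        using d[of "t' - x"] t' by (simp add: cbox_interval)
      ultimately show ?thesis
        using x by (simp add: f0_def divide_inverse mult.commute real_norm_def)
    qed
    with \<open>d > 0\<close> show ?thesis by blast
  qed
  with N that show ?thesis by blast
qed

lemma negligible_by_backward_steps:
  fixes P :: "real \<Rightarrow> bool"
  assumes \<eta>: "0 < \<eta>" and r: "r \<le> 1"
    and step: "\<And>a s. r \<le> a \<Longrightarrow> a < s \<Longrightarrow> s \<le> 1 \<Longrightarrow> s - a \<le> \<eta> \<Longrightarrow>
      negligible {y \<in> {s..1}. P y} \<Longrightarrow> negligible {y \<in> {a..s}. P y}"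
  shows "negligible {y \<in> {r..1}. P y}"
proof -
  have steps: "negligible {y \<in> {max r (1 - real n * \<eta>)..1}. P y}" for n
  proof (induction n)
    case 0
    have "{y \<in> {max r (1 - real 0 * \<eta>)..1}. P y} \<subseteq> {1}" using r by auto
    then show ?case using negligible_subset negligible_sing by blast
  next
    case (Suc n)
    define s where "s = max r (1 - real n * \<eta>)"
    define a where "a = max r (1 - real (Suc n) * \<eta>)"
    have IH: "negligible {y \<in> {s..1}. P y}" using Suc.IH unfolding s_def .
    have "negligible {y \<in> {a..1}. P y}"
    proof (cases "s = r")
      case True
      then have "a = r" using \<eta> by (auto simp: a_def s_def algebra_simps)
      with True IH show ?thesis by simp
    next
      case False
      then have as: "r \<le> a" "a < s" "s \<le> 1" "s - a \<le> \<eta>"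
        using \<eta> r by (auto simp: a_def s_def algebra_simps)
      have "{y \<in> {a..1}. P y} \<subseteq> {y \<in> {a..s}. P y} \<union> {y \<in> {s..1}. P y}" by auto
      with step[OF as IH] IH show ?thesis
        using negligible_subset negligible_Un by blast
    qed
    then show ?case unfolding a_def .
  qed
  obtain n :: nat where "(1 - r) / \<eta> \<le> real n" using real_arch_simple by blast
  then have "max r (1 - real n * \<eta>) = r" using \<eta> r by (simp add: field_simps)
  then show ?thesis using steps[of n] by simp
qed

lemma AE_lborel_not_in_negligible:
  assumes "negligible N"
  shows "AE x in lborel. x \<notin> N"
proof -
  have "N \<in> null_sets lebesgue" using assms negligible_iff_null_sets by blast
  then have "AE x in lebesgue. x \<notin> N" by (rule AE_not_in)
  then show ?thesis by (simp add: AE_completion_iff)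
qed

lemma AE_lborel_obtain_negligible:
  fixes P :: "real \<Rightarrow> bool"
  assumes "AE x in lborel. P x"
  obtains N where "negligible N" "\<And>x. x \<notin> N \<Longrightarrow> P x"
proof -
  from assms obtain N where N: "{x \<in> space lborel. \<not> P x} \<subseteq> N" "N \<in> null_sets lborel"
    by (rule AE_E) (blast intro: null_setsI)
  have "negligible N" using null_sets_completionI[OF N(2)] negligible_iff_null_sets by blast
  with N(1) that show ?thesis by auto
qed

lemma AE_lebesgue_on_iff_negligible:
  fixes S :: "'a::euclidean_space set"
  assumes S: "S \<in> sets lebesgue"
  shows "(AE x in lebesgue_on S. P x) \<longleftrightarrow> negligible {x \<in> S. \<not> P x}"
proof
  assume "AE x in lebesgue_on S. P x"
  then have "AE x in lebesgue. x \<in> S \<longrightarrow> P x" using AE_restrict_space_iff[of S lebesgue P] S by simp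
  then obtain N where N: "{x \<in> space lebesgue. \<not> (x \<in> S \<longrightarrow> P x)} \<subseteq> N" "N \<in> null_sets lebesgue"
    by (rule AE_E) (blast intro: null_setsI)
  from N(1) have "{x \<in> S. \<not> P x} \<subseteq> N" by auto
  with N(2) show "negligible {x \<in> S. \<not> P x}"
    using negligible_iff_null_sets negligible_subset by blast
next
  assume "negligible {x \<in> S. \<not> P x}"
  then have "AE x in lebesgue. x \<notin> {x \<in> S. \<not> P x}"
    using negligible_iff_null_sets AE_not_in by blast
  then have "AE x in lebesgue. x \<in> S \<longrightarrow> P x" by (auto elim: eventually_mono)
  then show "AE x in lebesgue_on S. P x" using AE_restrict_space_iff[of S lebesgue P] S by simp
qed

lemma absolutely_integrable_on_of_integrable_lebesgue_on:
  fixes f :: "'a::euclidean_space \<Rightarrow> real"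
  assumes "integrable (lebesgue_on S) f" "S \<in> sets lebesgue"
  shows "f absolutely_integrable_on S"
  using assms integrable_restrict_space[of S lebesgue f] unfolding set_integrable_def by simp

lemma absolutely_integrable_on_borel_representative:
  fixes f :: "real \<Rightarrow> real"
  assumes "f absolutely_integrable_on S"
  obtains g N where "g \<in> borel_measurable borel" "integrable lborel g" "negligible N"
    "\<And>y. y \<in> S - N \<Longrightarrow> g y = f y"
proof -
  define f0 where "f0 = (\<lambda>y. indicator S y *\<^sub>R f y)"
  have f0i: "integrable lebesgue f0" using assms unfolding f0_def set_integrable_def .
  obtain g where gm: "g \<in> borel_measurable lborel" and ae: "AE y in lborel. f0 y = g y"
    using completion_ex_borel_measurable_real[OF borel_measurable_integrable[OF f0i]] by blast
  have "integrable lebesgue g"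
    by (rule integrable_cong_AE_imp[OF f0i])
      (use gm ae in \<open>auto intro: measurable_completion AE_completion\<close>)
  then have "integrable lborel g" using integrable_completion[OF gm] by simp
  moreover obtain N where "negligible N" "\<And>y. y \<notin> N \<Longrightarrow> f0 y = g y"
    using AE_lborel_obtain_negligible[OF ae] by blast
  moreover have "g y = f y" if "y \<in> S - N" for y
    using that \<open>\<And>y. y \<notin> N \<Longrightarrow> f0 y = g y\<close>[of y] by (simp add: f0_def)
  ultimately show ?thesis
    using that[of g N] gm by (simp add: measurable_lborel1)
qed

lemma set_integrable_lebesgue_of_AE_eq_integrable_lborel:
  fixes g F :: "'a::euclidean_space \<Rightarrow> real"
  assumes ae: "AE y in lborel. g y = indicator S y *\<^sub>R F y" and gi: "integrable lborel g"
  shows "set_integrable lebesgue S F"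
proof -
  have gm: "g \<in> borel_measurable lborel" using gi by (rule borel_measurable_integrable)
  have ae': "AE y in lebesgue. g y = indicator S y *\<^sub>R F y" using ae by (rule AE_completion)
  have "(\<lambda>y. indicator S y *\<^sub>R F y) \<in> borel_measurable lebesgue"
    by (rule borel_measurable_AE[OF measurable_completion[OF gm] ae'])
  moreover have "integrable lebesgue g" using integrable_completion[OF gm] gi by simp
  ultimately show ?thesis
    unfolding set_integrable_def using ae' integrable_cong_AE_imp by blast
qed

lemma integral_Icc_eq_lborel_integral_Ioo:
  fixes F :: "real \<Rightarrow> real"
  assumes "integrable lborel (\<lambda>y. indicator {x<..<s} y * F y)"
  shows "integral {x..s} F = (\<integral>y. indicator {x<..<s} y * F y \<partial>lborel)"
proof -
  have si: "set_integrable lborel {x<..<s} F" using assms unfolding set_integrable_def by simp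
  have "integral {x..s} F = integral {x<..<s} F" by (rule integral_open_interval_real)
  also have "\<dots> = (LINT y:{x<..<s}|lborel. F y)"
    by (rule set_borel_integral_eq_integral(2)[OF si, symmetric])
  finally show ?thesis unfolding set_lebesgue_integral_def by simp
qed

lemma lborel_integral_Ioo_eq_zero:
  fixes F :: "real \<Rightarrow> real"
  assumes "integral {x..s} F = 0"
  shows "(\<integral>y. indicator {x<..<s} y * F y \<partial>lborel) = 0"
  using integral_Icc_eq_lborel_integral_Ioo[of x s F] assms not_integrable_integral_eq by metis

section \<open>Volterra equations with a kernel bounded away from zero on the diagonal\<close>

text \<open>Lebesgue differentiation, with the right endpoints of the averaging intervals chosen
  outside \<open>N\<close>.\<close>
lemma negligible_abs_gt_of_interval_integrals_le:
  fixes f :: "real \<Rightarrow> real"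
  assumes fi: "f integrable_on {a..s}" and N: "negligible N"
    and bound: "\<And>t t'. a \<le> t \<Longrightarrow> t < t' \<Longrightarrow> t' \<le> s \<Longrightarrow> t \<notin> N \<Longrightarrow> t' \<notin> N \<Longrightarrow>
                  \<bar>integral {t..t'} f\<bar> \<le> \<kappa> * (t' - t)"
  shows "negligible {x \<in> {a..s}. \<kappa> < \<bar>f x\<bar>}"
proof -
  obtain N2 where N2: "negligible N2"
    and avg: "\<And>x e. x \<in> {a..s} - N2 \<Longrightarrow> 0 < e \<Longrightarrow> \<exists>d>0. \<forall>t'. x < t' \<and> t' < x + d \<and> t' \<le> s \<longrightarrow>
        \<bar>integral {x..t'} f / (t' - x) - f x\<bar> < e"
    using right_averages_converge_ae[OF fi] by blast
  have "x \<in> N \<union> N2 \<union> {s}" if x: "x \<in> {a..s}" "\<kappa> < \<bar>f x\<bar>" for x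
  proof (rule ccontr)
    assume "x \<notin> N \<union> N2 \<union> {s}"
    then have xs: "x < s" "x \<notin> N" "x \<in> {a..s} - N2" using x by auto
    obtain d where "d > 0" and d: "\<And>t'. x < t' \<Longrightarrow> t' < x + d \<Longrightarrow> t' \<le> s \<Longrightarrow>
        \<bar>integral {x..t'} f / (t' - x) - f x\<bar> < \<bar>f x\<bar> - \<kappa>"
      using avg[OF xs(3), of "\<bar>f x\<bar> - \<kappa>"] x by auto
    have "\<not> {x<..<min (x + d) s} \<subseteq> N"
    proof
      assume "{x<..<min (x + d) s} \<subseteq> N"
      then have "negligible {x<..<min (x + d) s}" using N negligible_subset by blast
      moreover have "{x<..<min (x + d) s} \<noteq> {}" using \<open>d > 0\<close> xs by simp
      ultimately show False using open_not_negligible[of "{x<..<min (x + d) s}"] by auto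
    qed
    then obtain t' where t': "x < t'" "t' < x + d" "t' < s" "t' \<notin> N" by (auto simp: subset_eq)
    have "\<bar>integral {x..t'} f\<bar> \<le> \<kappa> * (t' - x)"
      using bound[of x t'] x xs t' by auto
    then have "\<bar>integral {x..t'} f / (t' - x)\<bar> \<le> \<kappa>"
      using t' by (simp add: abs_divide pos_divide_le_eq)
    with d[of t'] t' show False by linarith
  qed
  then have "{x \<in> {a..s}. \<kappa> < \<bar>f x\<bar>} \<subseteq> N \<union> N2 \<union> {s}" by blast
  then show ?thesis
    by (rule negligible_subset[rotated]) (use N N2 in auto)
qed

lemma kernel_equation_increment_identity:
  fixes f :: "real \<Rightarrow> real" and M :: "real \<Rightarrow> real \<Rightarrow> real"
  assumes Mi: "\<And>u v. t \<le> u \<Longrightarrow> v \<le> s \<Longrightarrow> (\<lambda>y. M t y * f y) integrable_on {u..v}"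
    and Mi': "(\<lambda>y. M t' y * f y) integrable_on {t'..s}" and fi: "f integrable_on {t..t'}"
    and tt: "t \<le> t'" "t' \<le> s"
    and Zt: "integral {t..s} (\<lambda>y. M t y * f y) = 0"
    and Zt': "integral {t'..s} (\<lambda>y. M t' y * f y) = 0"
  shows "M t t * integral {t..t'} f
    = integral {t'..s} (\<lambda>y. (M t' y - M t y) * f y) + integral {t..t'} (\<lambda>y. (M t t - M t y) * f y)"
proof -
  have "integral {t..t'} (\<lambda>y. M t y * f y) + integral {t'..s} (\<lambda>y. M t y * f y) = 0"
    using Henstock_Kurzweil_Integration.integral_combine[OF tt Mi[OF order_refl order_refl]] Zt
    by simp
  moreover have "integral {t'..s} (\<lambda>y. (M t' y - M t y) * f y)
      = integral {t'..s} (\<lambda>y. M t' y * f y) - integral {t'..s} (\<lambda>y. M t y * f y)"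
    using integral_diff[OF Mi' Mi[OF tt(1) order_refl]] by (simp add: algebra_simps)
  moreover have "integral {t..t'} (\<lambda>y. M t t * f y)
      = integral {t..t'} (\<lambda>y. M t y * f y) + integral {t..t'} (\<lambda>y. (M t t - M t y) * f y)"
    using integral_diff[OF integrable_on_cmult_left[OF fi, of "M t t"] Mi[OF order_refl tt(2)]]
    by (simp add: algebra_simps)
  ultimately show ?thesis using Zt' by simp
qed

lemma abs_interval_integral_le_of_kernel_equation:
  fixes f :: "real \<Rightarrow> real" and M :: "real \<Rightarrow> real \<Rightarrow> real"
  assumes fi: "f absolutely_integrable_on {a..s}"
    and Mc: "\<And>t. t \<in> {a..s} \<Longrightarrow> continuous_on {t..s} (M t)"
    and M1: "\<And>t t' y. a \<le> t \<Longrightarrow> t \<le> t' \<Longrightarrow> t' \<le> y \<Longrightarrow> y \<le> s \<Longrightarrow> \<bar>M t y - M t' y\<bar> \<le> L * (t' - t)"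
    and M2: "\<And>t y. a \<le> t \<Longrightarrow> t \<le> y \<Longrightarrow> y \<le> s \<Longrightarrow> \<bar>M t y - M t t\<bar> \<le> L * (y - t)"
    and Md: "\<And>t. t \<in> {a..s} \<Longrightarrow> c \<le> \<bar>M t t\<bar>" and c: "0 < c" and L: "0 \<le> L"
    and tt: "a \<le> t" "t < t'" "t' \<le> s"
    and Zt: "integral {t..s} (\<lambda>y. M t y * f y) = 0"
    and Zt': "integral {t'..s} (\<lambda>y. M t' y * f y) = 0"
  shows "\<bar>integral {t..t'} f\<bar> \<le> 2 * L * integral {a..s} (\<lambda>y. \<bar>f y\<bar>) / c * (t' - t)"
proof -
  define F where "F = integral {a..s} (\<lambda>y. \<bar>f y\<bar>)"
  have Mi: "(\<lambda>y. M \<tau> y * f y) integrable_on {u..v}"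
    if "a \<le> \<tau>" "\<tau> \<le> u" "v \<le> s" for \<tau> u v
  proof (cases "u \<le> v")
    case True
    then have "continuous_on {u..v} (M \<tau>)" using continuous_on_subset[OF Mc[of \<tau>]] that by auto
    then show ?thesis by (rule continuous_times_absolutely_integrable_on_subinterval[OF fi]) (use that in auto)
  qed (simp add: integrable_on_empty)
  have far: "\<bar>integral {t'..s} (\<lambda>y. (M t' y - M t y) * f y)\<bar> \<le> L * (t' - t) * F"
    unfolding F_def
  proof (rule abs_integral_times_le[OF fi])
    show "(\<lambda>y. (M t' y - M t y) * f y) integrable_on {t'..s}"
      using integrable_diff[OF Mi[of t' t' s] Mi[of t t' s]] tt by (simp add: algebra_simps)
    show "\<bar>M t' y - M t y\<bar> \<le> L * (t' - t)" if "y \<in> {t'..s}" for y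
      using M1[of t t' y] that tt by (simp add: abs_minus_commute)
  qed (use tt L in auto)
  have fi': "f integrable_on {t..t'}"
    using integrable_on_subinterval[OF set_lebesgue_integral_eq_integral(1)[OF fi]] tt by simp
  have near: "\<bar>integral {t..t'} (\<lambda>y. (M t t - M t y) * f y)\<bar> \<le> L * (t' - t) * F"
    unfolding F_def
  proof (rule abs_integral_times_le[OF fi])
    show "(\<lambda>y. (M t t - M t y) * f y) integrable_on {t..t'}"
      using integrable_diff[OF integrable_on_cmult_left[OF fi', of "M t t"] Mi[of t t t']] tt
      by (simp add: algebra_simps)
    show "\<bar>M t t - M t y\<bar> \<le> L * (t' - t)" if "y \<in> {t..t'}" for y
    proof -
      have "\<bar>M t y - M t t\<bar> \<le> L * (y - t)" using M2[of t y] that tt by auto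
      also have "\<dots> \<le> L * (t' - t)" using that L by (intro mult_left_mono) auto
      finally show ?thesis by (simp add: abs_minus_commute)
    qed
  qed (use tt L in auto)
  have "\<bar>M t t\<bar> * \<bar>integral {t..t'} f\<bar> \<le> 2 * L * (t' - t) * F"
    using kernel_equation_increment_identity[OF Mi[OF tt(1)] Mi[of t' t' s] fi' _ _ Zt Zt'] tt far near
      abs_triangle_ineq[of "integral {t'..s} (\<lambda>y. (M t' y - M t y) * f y)"
        "integral {t..t'} (\<lambda>y. (M t t - M t y) * f y)"]
    by (simp add: abs_mult)
  moreover have "c * \<bar>integral {t..t'} f\<bar> \<le> \<bar>M t t\<bar> * \<bar>integral {t..t'} f\<bar>"
    using Md[of t] tt by (intro mult_right_mono) auto
  ultimately have "c * \<bar>integral {t..t'} f\<bar> \<le> 2 * L * (t' - t) * F" by linarith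
  then show ?thesis unfolding F_def using c by (simp add: field_simps)
qed

text \<open>The increments of \<open>f\<close> are bounded by \<open>\<kappa> = 2 L \<parallel>f\<parallel>\<^sub>1 / c\<close>, hence so is \<open>\<bar>f\<bar>\<close> almost
  everywhere, and integrating gives \<open>\<parallel>f\<parallel>\<^sub>1 \<le> (2 L (s - a) / c) \<parallel>f\<parallel>\<^sub>1\<close>, so \<open>\<parallel>f\<parallel>\<^sub>1 = 0\<close>.\<close>
lemma negligible_nonzero_of_kernel_equation:
  fixes f :: "real \<Rightarrow> real" and M :: "real \<Rightarrow> real \<Rightarrow> real"
  assumes as: "a < s" and fi: "f absolutely_integrable_on {a..s}"
    and Mc: "\<And>t. t \<in> {a..s} \<Longrightarrow> continuous_on {t..s} (M t)"
    and M1: "\<And>t t' y. a \<le> t \<Longrightarrow> t \<le> t' \<Longrightarrow> t' \<le> y \<Longrightarrow> y \<le> s \<Longrightarrow> \<bar>M t y - M t' y\<bar> \<le> L * (t' - t)"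
    and M2: "\<And>t y. a \<le> t \<Longrightarrow> t \<le> y \<Longrightarrow> y \<le> s \<Longrightarrow> \<bar>M t y - M t t\<bar> \<le> L * (y - t)"
    and Md: "\<And>t. t \<in> {a..s} \<Longrightarrow> c \<le> \<bar>M t t\<bar>" and c: "0 < c" and L: "0 \<le> L"
    and small: "2 * L * (s - a) < c"
    and N: "negligible N" and Z: "\<And>t. t \<in> {a..s} - N \<Longrightarrow> integral {t..s} (\<lambda>y. M t y * f y) = 0"
  shows "negligible {x \<in> {a..s}. f x \<noteq> 0}"
proof -
  define F where "F = integral {a..s} (\<lambda>y. \<bar>f y\<bar>)"
  define \<kappa> where "\<kappa> = 2 * L * F / c"
  have Fi: "(\<lambda>y. \<bar>f y\<bar>) integrable_on {a..s}"
    using abs_integrable_on_subinterval[OF fi order_refl order_refl] .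
  have F0: "0 \<le> F" unfolding F_def by (intro integral_nonneg Fi) auto
  have \<kappa>0: "0 \<le> \<kappa>" unfolding \<kappa>_def using L F0 c by simp
  have f_int: "f integrable_on {a..s}"
    using fi set_lebesgue_integral_eq_integral(1) by blast
  have neg: "negligible {x \<in> {a..s}. \<kappa> < \<bar>f x\<bar>}"
  proof (rule negligible_abs_gt_of_interval_integrals_le[OF f_int N])
    fix t t' assume "a \<le> t" "t < t'" "t' \<le> s" "t \<notin> N" "t' \<notin> N"
    then show "\<bar>integral {t..t'} f\<bar> \<le> \<kappa> * (t' - t)"
      unfolding \<kappa>_def F_def
      by (intro abs_interval_integral_le_of_kernel_equation[OF fi Mc M1 M2 Md c L] Z) auto
  qed
  have "F \<le> \<kappa> * (s - a)"
    unfolding F_def using integral_abs_le_of_negligible_exceeding[OF Fi _ \<kappa>0 neg] as by simp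
  then have "F \<le> (2 * L * (s - a) / c) * F" unfolding \<kappa>_def by (simp add: field_simps)
  with small c F0 have "F = 0"
    by (smt (verit, best) divide_less_eq_1_pos mult_less_cancel_right2)
  then have "\<kappa> = 0" unfolding \<kappa>_def by simp
  with neg show ?thesis by simp
qed

section \<open>Abel's transform\<close>

definition beta_weight :: "real \<Rightarrow> real \<Rightarrow> real" where
  "beta_weight \<alpha> u = u powr (\<alpha> - 1) * (1 - u) powr (- \<alpha>)"

lemma beta_weight_nonneg: "0 \<le> beta_weight \<alpha> u"
  unfolding beta_weight_def by simp

lemma borel_measurable_beta_weight[measurable]: "beta_weight \<alpha> \<in> borel_measurable borel"
  unfolding beta_weight_def by measurable

lemma
  assumes "0 < \<alpha>" "\<alpha> < 1"
  shows integrable_beta_weight: "integrable lborel (\<lambda>u. indicator {0<..<1} u * beta_weight \<alpha> u)"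
    and integral_beta_weight: "(\<integral>u. indicator {0<..<1} u * beta_weight \<alpha> u \<partial>lborel) = Beta \<alpha> (1 - \<alpha>)"
proof -
  have "set_integrable lborel {0..1} (\<lambda>u. u powr (\<alpha> - 1) * (1 - u) powr ((1 - \<alpha>) - 1))"
    using integrable_Beta[of \<alpha> "1 - \<alpha>"] assms by auto
  then have "set_integrable lborel {0..1} (beta_weight \<alpha>)"
    unfolding beta_weight_def[abs_def] by simp
  then have "set_integrable lborel {0<..<1} (beta_weight \<alpha>)"
    by (rule set_integrable_subset) auto
  note si = this
  then show "integrable lborel (\<lambda>u. indicator {0<..<1} u * beta_weight \<alpha> u)"
    unfolding set_integrable_def by simp
  have "((\<lambda>u. u powr (\<alpha> - 1) * (1 - u) powr ((1 - \<alpha>) - 1)) has_integral Beta \<alpha> (1 - \<alpha>)) {0..1}"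
    using has_integral_Beta_real[of \<alpha> "1 - \<alpha>"] assms by auto
  then have "(beta_weight \<alpha> has_integral Beta \<alpha> (1 - \<alpha>)) {0<..<1}"
    unfolding beta_weight_def[abs_def] has_integral_Icc_iff_Ioo by simp
  then have "(LINT u:{0<..<1}|lborel. beta_weight \<alpha> u) = Beta \<alpha> (1 - \<alpha>)"
    using set_borel_integral_eq_integral(2)[OF si] integral_unique by metis
  then show "(\<integral>u. indicator {0<..<1} u * beta_weight \<alpha> u \<partial>lborel) = Beta \<alpha> (1 - \<alpha>)"
    unfolding set_lebesgue_integral_def by simp
qed

lemma Beta_complement_pos:
  fixes \<alpha> :: real
  assumes "0 < \<alpha>" "\<alpha> < 1"
  shows "0 < Beta \<alpha> (1 - \<alpha>)"
  using assms Gamma_real_pos[of \<alpha>] Gamma_real_pos[of "1 - \<alpha>"] by (simp add: Beta_def)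

lemma
  fixes g :: "real \<Rightarrow> real"
  assumes a: "0 < \<alpha>" "\<alpha> < 1" and g: "g \<in> borel_measurable borel" and gB: "\<And>u. \<bar>g u\<bar> \<le> B"
  shows integrable_beta_weight_times_bounded:
      "integrable lborel (\<lambda>u. indicator {0<..<1} u * beta_weight \<alpha> u * g u)"
    and abs_integral_beta_weight_times_bounded_le:
      "\<bar>\<integral>u. indicator {0<..<1} u * beta_weight \<alpha> u * g u \<partial>lborel\<bar> \<le> B * Beta \<alpha> (1 - \<alpha>)"
proof -
  have wB: "integrable lborel (\<lambda>u. B * (indicator {0<..<1} u * beta_weight \<alpha> u))"
    using integrable_beta_weight[OF a] by simp
  have bnd: "norm (indicator {0<..<1} u * beta_weight \<alpha> u * g u) \<le> B * (indicator {0<..<1} u * beta_weight \<alpha> u)" for u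
    using mult_right_mono[OF gB[of u] beta_weight_nonneg[of \<alpha> u]]
    by (auto simp: indicator_def abs_mult beta_weight_nonneg mult.commute)
  show i: "integrable lborel (\<lambda>u. indicator {0<..<1} u * beta_weight \<alpha> u * g u)"
    by (rule Bochner_Integration.integrable_bound[OF wB])
      (use g bnd in \<open>auto intro!: AE_I2 order.trans[OF _ abs_ge_self]\<close>)
  have "\<bar>\<integral>u. indicator {0<..<1} u * beta_weight \<alpha> u * g u \<partial>lborel\<bar>
      \<le> (\<integral>u. B * (indicator {0<..<1} u * beta_weight \<alpha> u) \<partial>lborel)"
    by (rule integral_abs_bound_integral[OF i wB]) (use bnd in auto)
  also have "\<dots> = B * Beta \<alpha> (1 - \<alpha>)"
    using integral_beta_weight[OF a] by simp
  finally show "\<bar>\<integral>u. indicator {0<..<1} u * beta_weight \<alpha> u * g u \<partial>lborel\<bar> \<le> B * Beta \<alpha> (1 - \<alpha>)" .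
qed

text \<open>Abel's trick: integrating the equation at \<open>x\<close> against \<open>(x - t) powr (\<alpha> - 1)\<close> over
  \<open>x \<in> (t, s)\<close> and exchanging the integrations replaces the singular factor \<open>(y - x) powr (- \<alpha>)\<close>
  by this kernel, whose integral over \<open>x\<close> is \<open>B(\<alpha>, 1 - \<alpha>)\<close> for every \<open>y > t\<close>.\<close>
definition abel_kernel :: "real \<Rightarrow> real \<Rightarrow> real \<Rightarrow> real \<Rightarrow> real" where
  "abel_kernel \<alpha> t y x = indicator {t<..<y} x * ((x - t) powr (\<alpha> - 1) * (y - x) powr (- \<alpha>))"

lemma abel_kernel_nonneg: "0 \<le> abel_kernel \<alpha> t y x"
  unfolding abel_kernel_def by (simp add: indicator_def)

lemma abel_kernel_affine:
  assumes "t < y"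
  shows "abel_kernel \<alpha> t y (t + (y - t) * u) = indicator {0<..<1} u * beta_weight \<alpha> u / (y - t)"
proof (cases "0 < u \<and> u < 1")
  case True
  define c where "c = y - t"
  have c: "0 < c" using assms c_def by simp
  have "t + c * u - t = c * u" "y - (t + c * u) = c * (1 - u)"
    by (simp_all add: c_def algebra_simps)
  moreover have "t + c * u \<in> {t<..<y}"
  proof -
    have "c * u < c" using mult_strict_left_mono[of u 1 c] True c by simp
    then have "t + c * u < y" using c_def by linarith
    moreover have "t < t + c * u" using True c by simp
    ultimately show ?thesis by simp
  qed
  ultimately have "abel_kernel \<alpha> t y (t + c * u) = (c * u) powr (\<alpha> - 1) * (c * (1 - u)) powr (- \<alpha>)"
    by (simp add: abel_kernel_def)
  also have "\<dots> = (c powr (\<alpha> - 1) * c powr (- \<alpha>)) * beta_weight \<alpha> u"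
    using True c by (simp add: powr_mult beta_weight_def mult_ac)
  also have "c powr (\<alpha> - 1) * c powr (- \<alpha>) = 1 / c"
  proof -
    have "c powr (\<alpha> - 1) * c powr (- \<alpha>) = c powr (- 1)"
      by (simp add: powr_add[symmetric])
    then show ?thesis using c by (simp add: powr_minus_divide)
  qed
  finally have "abel_kernel \<alpha> t y (t + c * u) = beta_weight \<alpha> u / c" by simp
  then show ?thesis using True by (simp add: c_def)
next
  case False
  then have "(y - t) * u \<le> 0 \<or> (y - t) * 1 \<le> (y - t) * u"
    using assms by (auto simp: not_less mult_nonneg_nonpos intro!: mult_left_mono)
  then have "t + (y - t) * u \<le> t \<or> y \<le> t + (y - t) * u"
    by auto
  then show ?thesis using False by (auto simp: abel_kernel_def indicator_def)
qed

lemma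
  fixes g :: "real \<Rightarrow> real"
  assumes "t < y"
  shows integral_abel_kernel_times:
      "(\<integral>x. abel_kernel \<alpha> t y x * g x \<partial>lborel)
     = (\<integral>u. indicator {0<..<1} u * beta_weight \<alpha> u * g (t + (y - t) * u) \<partial>lborel)"
    and integrable_abel_kernel_times_iff:
      "integrable lborel (\<lambda>x. abel_kernel \<alpha> t y x * g x)
     \<longleftrightarrow> integrable lborel (\<lambda>u. indicator {0<..<1} u * beta_weight \<alpha> u * g (t + (y - t) * u))"
proof -
  define F where "F = (\<lambda>x. abel_kernel \<alpha> t y x * g x)"
  define H where "H = (\<lambda>u. indicator {0<..<1} u * beta_weight \<alpha> u * g (t + (y - t) * u))"
  have c: "0 < y - t" using assms by simp
  have eq: "F (t + (y - t) * u) = H u / (y - t)" for u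
    unfolding F_def H_def abel_kernel_affine[OF assms] by simp
  have "(\<integral>x. F x \<partial>lborel) = (y - t) * (\<integral>u. F (t + (y - t) * u) \<partial>lborel)"
    using lborel_integral_real_affine[of "y - t" F t] c by simp
  also have "\<dots> = (\<integral>u. H u \<partial>lborel)"
    using c by (simp add: eq)
  finally show "(\<integral>x. F x \<partial>lborel) = (\<integral>u. H u \<partial>lborel)" .
  have "integrable lborel F \<longleftrightarrow> integrable lborel (\<lambda>u. F (t + (y - t) * u))"
    using lborel_integrable_real_affine_iff[of "y - t" F t] c by simp
  also have "\<dots> \<longleftrightarrow> integrable lborel H"
    using c integrable_mult_left_iff[of lborel "1 / (y - t)" H] by (simp add: eq)
  finally show "integrable lborel F \<longleftrightarrow> integrable lborel H" .
qed

definition abel_average :: "real \<Rightarrow> (real \<times> real \<Rightarrow> real) \<Rightarrow> real \<Rightarrow> real \<Rightarrow> real" where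
  "abel_average \<alpha> G t y = (\<integral>u. indicator {0<..<1} u * beta_weight \<alpha> u * G (t + (y - t) * u, y) \<partial>lborel)"

lemma borel_measurable_abel_average:
  assumes [measurable]: "G \<in> borel_measurable borel"
  shows "abel_average \<alpha> G t \<in> borel_measurable borel"
proof -
  have "(\<lambda>(y, u). indicator {0<..<1} u * beta_weight \<alpha> u * G (t + (y - t) * u, y))
      \<in> borel_measurable (lborel \<Otimes>\<^sub>M lborel)"
    by measurable
  from lborel.borel_measurable_lebesgue_integral[OF this] show ?thesis
    by (simp add: abel_average_def[abs_def] measurable_lborel1)
qed

lemma abs_abel_average_le:
  assumes "0 < \<alpha>" "\<alpha> < 1" and [measurable]: "G \<in> borel_measurable borel"
    and "\<And>p. \<bar>G p\<bar> \<le> B"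
  shows "\<bar>abel_average \<alpha> G t y\<bar> \<le> B * Beta \<alpha> (1 - \<alpha>)"
  unfolding abel_average_def
  by (rule abs_integral_beta_weight_times_bounded_le) (use assms in simp_all)

lemma abel_average_diagonal:
  assumes "0 < \<alpha>" "\<alpha> < 1"
  shows "abel_average \<alpha> G t t = Beta \<alpha> (1 - \<alpha>) * G (t, t)"
  using integral_beta_weight[OF assms] by (simp add: abel_average_def)

lemma
  fixes G :: "real \<times> real \<Rightarrow> real"
  assumes a: "0 < \<alpha>" "\<alpha> < 1" and [measurable]: "G \<in> borel_measurable borel"
    and GB: "\<And>p. \<bar>G p\<bar> \<le> B" and ty: "t < y"
  shows integrable_abel_kernel_times_bounded:
      "integrable lborel (\<lambda>x. abel_kernel \<alpha> t y x * G (x, y))"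
    and integral_abel_kernel_times_bounded:
      "(\<integral>x. abel_kernel \<alpha> t y x * G (x, y) \<partial>lborel) = abel_average \<alpha> G t y"
    and integral_abs_abel_kernel_times_bounded_le:
      "(\<integral>x. \<bar>abel_kernel \<alpha> t y x * G (x, y)\<bar> \<partial>lborel) \<le> B * Beta \<alpha> (1 - \<alpha>)"
proof -
  have gB: "\<bar>G (t + (y - t) * u, y)\<bar> \<le> B" for u using GB .
  show "integrable lborel (\<lambda>x. abel_kernel \<alpha> t y x * G (x, y))"
    using integrable_abel_kernel_times_iff[OF ty, of \<alpha> "\<lambda>x. G (x, y)"]
      integrable_beta_weight_times_bounded[OF a _ gB] by simp
  show "(\<integral>x. abel_kernel \<alpha> t y x * G (x, y) \<partial>lborel) = abel_average \<alpha> G t y"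
    unfolding abel_average_def by (rule integral_abel_kernel_times[OF ty])
  have "(\<integral>x. \<bar>abel_kernel \<alpha> t y x * G (x, y)\<bar> \<partial>lborel)
      = (\<integral>u. indicator {0<..<1} u * beta_weight \<alpha> u * \<bar>G (t + (y - t) * u, y)\<bar> \<partial>lborel)"
    using integral_abel_kernel_times[OF ty, of \<alpha> "\<lambda>x. \<bar>G (x, y)\<bar>"]
    by (simp add: abs_mult abel_kernel_nonneg)
  also have "\<dots> \<le> B * Beta \<alpha> (1 - \<alpha>)"
    using abs_integral_beta_weight_times_bounded_le[OF a _ , of "\<lambda>u. \<bar>G (t + (y - t) * u, y)\<bar>" B] GB
    by simp
  finally show "(\<integral>x. \<bar>abel_kernel \<alpha> t y x * G (x, y)\<bar> \<partial>lborel) \<le> B * Beta \<alpha> (1 - \<alpha>)" .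
qed

lemma integrable_abel_kernel_product:
  fixes G :: "real \<times> real \<Rightarrow> real" and h :: "real \<Rightarrow> real"
  assumes a: "0 < \<alpha>" "\<alpha> < 1"
    and G[measurable]: "G \<in> borel_measurable borel" and GB: "\<And>p. \<bar>G p\<bar> \<le> B"
    and h[measurable]: "h \<in> borel_measurable borel" and hi: "integrable lborel h"
  shows "integrable (lborel \<Otimes>\<^sub>M lborel)
    (\<lambda>(y, x). indicator {t<..<s} y * h y * (abel_kernel \<alpha> t y x * G (x, y)))"
proof -
  define \<Phi> where "\<Phi> = (\<lambda>y x. indicator {t<..<s} y * h y * (abel_kernel \<alpha> t y x * G (x, y)))"
  have \<Phi>m: "(\<lambda>(y, x). \<Phi> y x) \<in> borel_measurable (lborel \<Otimes>\<^sub>M lborel)"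
    unfolding \<Phi>_def abel_kernel_def indicator_def greaterThanLessThan_iff case_prod_beta
    by measurable
  let ?\<beta> = "Beta \<alpha> (1 - \<alpha>)"
  have int1: "integrable lborel (\<lambda>y. \<integral>x. norm (\<Phi> y x) \<partial>lborel)"
  proof (rule Bochner_Integration.integrable_bound)
    show "integrable lborel (\<lambda>y. B * ?\<beta> * h y)" using hi by simp
    have "(\<lambda>(y, x). norm (\<Phi> y x)) \<in> borel_measurable (lborel \<Otimes>\<^sub>M lborel)"
      using measurable_compose[OF \<Phi>m borel_measurable_norm] by (simp add: case_prod_beta)
    then show "(\<lambda>y. \<integral>x. norm (\<Phi> y x) \<partial>lborel) \<in> borel_measurable lborel"
      by (rule lborel.borel_measurable_lebesgue_integral)
    show "AE y in lborel. norm (\<integral>x. norm (\<Phi> y x) \<partial>lborel) \<le> norm (B * ?\<beta> * h y)"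
    proof (rule AE_I2)
      fix y
      have "(\<integral>x. norm (\<Phi> y x) \<partial>lborel)
          = (indicator {t<..<s} y * \<bar>h y\<bar>) * (\<integral>x. \<bar>abel_kernel \<alpha> t y x * G (x, y)\<bar> \<partial>lborel)"
        unfolding \<Phi>_def by (simp add: abs_mult)
      moreover have "0 \<le> (\<integral>x. \<bar>abel_kernel \<alpha> t y x * G (x, y)\<bar> \<partial>lborel)" by simp
      moreover have "(\<integral>x. \<bar>abel_kernel \<alpha> t y x * G (x, y)\<bar> \<partial>lborel) \<le> B * ?\<beta>" if "t < y"
        using integral_abs_abel_kernel_times_bounded_le[OF a G GB that] .
      ultimately show "norm (\<integral>x. norm (\<Phi> y x) \<partial>lborel) \<le> norm (B * ?\<beta> * h y)"
        using GB[of "(0, 0)"] Beta_complement_pos[OF a]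
        by (auto simp: indicator_def abs_mult mult_left_mono mult.commute)
    qed
  qed
  have int2: "AE y in lborel. integrable lborel (\<Phi> y)"
    by (rule AE_I2)
      (use integrable_abel_kernel_times_bounded[OF a G GB] in \<open>auto simp: \<Phi>_def indicator_def\<close>)
  show ?thesis
    using lborel_pair.Fubini_integrable[OF \<Phi>m] int1 int2 unfolding \<Phi>_def by simp
qed

lemma integral_abel_average_eq_zero:
  fixes G :: "real \<times> real \<Rightarrow> real" and h :: "real \<Rightarrow> real"
  assumes a: "0 < \<alpha>" "\<alpha> < 1"
    and G[measurable]: "G \<in> borel_measurable borel" and GB: "\<And>p. \<bar>G p\<bar> \<le> B"
    and h[measurable]: "h \<in> borel_measurable borel" and hi: "integrable lborel h"
    and Z: "AE x in lborel. t < x \<and> x < s \<longrightarrow>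
        (\<integral>y. indicator {x<..<s} y * ((y - x) powr (- \<alpha>) * G (x, y) * h y) \<partial>lborel) = 0"
  shows "(\<integral>y. indicator {t<..<s} y * (h y * abel_average \<alpha> G t y) \<partial>lborel) = 0"
proof -
  define \<Phi> where "\<Phi> = (\<lambda>y x. indicator {t<..<s} y * h y * (abel_kernel \<alpha> t y x * G (x, y)))"
  have "(\<integral>y. indicator {t<..<s} y * (h y * abel_average \<alpha> G t y) \<partial>lborel)
      = (\<integral>y. (\<integral>x. \<Phi> y x \<partial>lborel) \<partial>lborel)"
    by (rule Bochner_Integration.integral_cong)
      (use integral_abel_kernel_times_bounded[OF a G GB] in \<open>auto simp: \<Phi>_def indicator_def\<close>)
  also have "\<dots> = (\<integral>x. (\<integral>y. \<Phi> y x \<partial>lborel) \<partial>lborel)"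
    using lborel_pair.Fubini_integral[of \<Phi>] integrable_abel_kernel_product[OF a G GB h hi]
    unfolding \<Phi>_def by simp
  also have "\<dots> = 0"
  proof (rule integral_eq_zero_AE)
    show "AE x in lborel. (\<integral>y. \<Phi> y x \<partial>lborel) = 0"
      using Z
    proof eventually_elim
      case (elim x)
      show ?case
      proof (cases "t < x \<and> x < s")
        case True
        have "\<Phi> y x = (x - t) powr (\<alpha> - 1) * (indicator {x<..<s} y * ((y - x) powr (- \<alpha>) * G (x, y) * h y))" for y
          unfolding \<Phi>_def abel_kernel_def using True by (auto simp: indicator_def)
        then show ?thesis using elim True by simp
      next
        case False
        then have "\<Phi> y x = 0" for y unfolding \<Phi>_def abel_kernel_def by (auto simp: indicator_def)
        then show ?thesis by simp
      qed
    qed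
  qed
  finally show ?thesis .
qed

lemma integral_abel_average_times_eq_zero:
  fixes G :: "real \<times> real \<Rightarrow> real" and h :: "real \<Rightarrow> real"
  assumes a: "0 < \<alpha>" "\<alpha> < 1"
    and G[measurable]: "G \<in> borel_measurable borel" and GB: "\<And>p. \<bar>G p\<bar> \<le> B"
    and hi: "h absolutely_integrable_on {a..s}" and t: "a \<le> t"
    and N1: "negligible N1"
    and J0: "\<And>x. x \<in> {a..s} - N1 \<Longrightarrow> integral {x..s} (\<lambda>y. (y - x) powr (- \<alpha>) * G (x, y) * h y) = 0"
  shows "integral {t..s} (\<lambda>y. abel_average \<alpha> G t y * h y) = 0"
proof -
  obtain hb N where hb[measurable]: "hb \<in> borel_measurable borel" and hbi: "integrable lborel hb"
    and N: "negligible N" and hbh: "\<And>y. y \<in> {a..s} - N \<Longrightarrow> hb y = h y"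
    using absolutely_integrable_on_borel_representative[OF hi] by blast
  have Z: "AE x in lborel. t < x \<and> x < s \<longrightarrow>
      (\<integral>y. indicator {x<..<s} y * ((y - x) powr (- \<alpha>) * G (x, y) * hb y) \<partial>lborel) = 0"
    using AE_lborel_not_in_negligible[OF N1]
  proof eventually_elim
    case (elim x)
    show ?case
    proof (intro impI lborel_integral_Ioo_eq_zero)
      assume "t < x \<and> x < s"
      then have "integral {x..s} (\<lambda>y. (y - x) powr (- \<alpha>) * G (x, y) * hb y)
          = integral {x..s} (\<lambda>y. (y - x) powr (- \<alpha>) * G (x, y) * h y)"
        using hbh t by (intro integral_spike[OF N]) auto
      also have "\<dots> = 0" using J0[of x] \<open>t < x \<and> x < s\<close> t elim by auto
      finally show "integral {x..s} (\<lambda>y. (y - x) powr (- \<alpha>) * G (x, y) * hb y) = 0" .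
    qed
  qed
  let ?\<beta> = "Beta \<alpha> (1 - \<alpha>)"
  have R: "(\<integral>y. indicator {t<..<s} y * (hb y * abel_average \<alpha> G t y) \<partial>lborel) = 0"
    by (rule integral_abel_average_eq_zero[OF a G GB hb hbi Z])
  have "integrable lborel (\<lambda>y. indicator {t<..<s} y * (hb y * abel_average \<alpha> G t y))"
  proof (rule Bochner_Integration.integrable_bound)
    show "integrable lborel (\<lambda>y. B * ?\<beta> * hb y)" using hbi by simp
    show "(\<lambda>y. indicator {t<..<s} y * (hb y * abel_average \<alpha> G t y)) \<in> borel_measurable lborel"
      using borel_measurable_abel_average[OF G, of \<alpha> t] by (simp add: measurable_lborel1)
    show "AE y in lborel. norm (indicator {t<..<s} y * (hb y * abel_average \<alpha> G t y)) \<le> norm (B * ?\<beta> * hb y)"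
    proof (rule AE_I2)
      fix y
      have "\<bar>abel_average \<alpha> G t y\<bar> \<le> B * ?\<beta>" by (rule abs_abel_average_le[OF a G GB])
      then have "\<bar>hb y * abel_average \<alpha> G t y\<bar> \<le> \<bar>hb y\<bar> * (B * ?\<beta>)"
        by (simp add: abs_mult mult_left_mono)
      then show "norm (indicator {t<..<s} y * (hb y * abel_average \<alpha> G t y)) \<le> norm (B * ?\<beta> * hb y)"
        using GB[of "(0, 0)"] Beta_complement_pos[OF a] by (auto simp: indicator_def abs_mult mult_ac)
    qed
  qed
  have "integral {t..s} (\<lambda>y. abel_average \<alpha> G t y * h y) = integral {t..s} (\<lambda>y. hb y * abel_average \<alpha> G t y)"
    by (rule integral_spike[OF N]) (use hbh t in auto)
  also have "\<dots> = (\<integral>y. indicator {t<..<s} y * (hb y * abel_average \<alpha> G t y) \<partial>lborel)"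
    by (rule integral_Icc_eq_lborel_integral_Ioo) fact
  also have "\<dots> = 0" by (rule R)
  finally show ?thesis .
qed

section \<open>Kernels near the diagonal\<close>

definition diagonal_strip :: "real \<Rightarrow> (real \<times> real) set" where
  "diagonal_strip \<delta> = {(x, y). 0 \<le> x \<and> x \<le> y \<and> y \<le> 1 \<and> y - x < \<delta>}"

lemma mem_diagonal_strip_iff [simp]:
  "(x, y) \<in> diagonal_strip \<delta> \<longleftrightarrow> 0 \<le> x \<and> x \<le> y \<and> y \<le> 1 \<and> y - x < \<delta>"
  by (simp add: diagonal_strip_def)

lemma diagonal_strip_subset_Delta: "diagonal_strip \<delta> \<subseteq> Delta"
  by (auto simp: diagonal_strip_def Delta_def)

lemma sets_borel_diagonal_strip [measurable]: "diagonal_strip \<delta> \<in> sets borel"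
proof -
  have "diagonal_strip \<delta> = {p. 0 \<le> fst p \<and> fst p \<le> snd p \<and> snd p \<le> 1} \<inter> {p. snd p - fst p < \<delta>}"
    by (auto simp: diagonal_strip_def)
  moreover have "closed {p::real \<times> real. 0 \<le> fst p \<and> fst p \<le> snd p \<and> snd p \<le> 1}"
    by (intro closed_Collect_conj closed_Collect_le continuous_intros)
  moreover have "open {p::real \<times> real. snd p - fst p < \<delta>}"
    by (intro open_Collect_less continuous_intros)
  ultimately show ?thesis by auto
qed

lemma dist_Pair_le_sum_abs: "dist (a, b) (c, d) \<le> \<bar>a - c\<bar> + \<bar>b - (d::real)\<bar>"
  using sqrt_sum_squares_le_sum_abs[of "a - c" "b - d"]
  by (simp add: dist_Pair_Pair dist_real_def)

lemma convex_combination_in_diagonal_strip: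
  assumes "(t, y) \<in> diagonal_strip \<delta>" "0 < u" "u < 1"
  shows "(t + (y - t) * u, y) \<in> diagonal_strip \<delta>"
proof -
  have "0 \<le> (y - t) * u" "(y - t) * u \<le> y - t"
    using assms by (auto intro: mult_left_le)
  then show ?thesis using assms(1) by simp
qed

lemma dist_convex_combinations_le:
  fixes t y t' y' u :: real
  assumes "0 < u" "u < 1"
  shows "dist (t + (y - t) * u, y) (t' + (y' - t') * u, y') \<le> \<bar>t - t'\<bar> + 2 * \<bar>y - y'\<bar>"
proof -
  have "t + (y - t) * u - (t' + (y' - t') * u) = (1 - u) * (t - t') + u * (y - y')"
    by (simp add: algebra_simps)
  also have "\<bar>\<dots>\<bar> \<le> (1 - u) * \<bar>t - t'\<bar> + u * \<bar>y - y'\<bar>"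
    using assms abs_triangle_ineq[of "(1 - u) * (t - t')" "u * (y - y')"] by (simp add: abs_mult)
  also have "\<dots> \<le> \<bar>t - t'\<bar> + \<bar>y - y'\<bar>"
    using assms by (intro add_mono mult_left_le_one_le) auto
  finally have "\<bar>t + (y - t) * u - (t' + (y' - t') * u)\<bar> + \<bar>y - y'\<bar> \<le> \<bar>t - t'\<bar> + 2 * \<bar>y - y'\<bar>"
    by simp
  with dist_Pair_le_sum_abs[of "t + (y - t) * u" y "t' + (y' - t') * u" y'] show ?thesis
    by (rule order_trans)
qed

lemma abel_average_diff_le:
  fixes G :: "real \<times> real \<Rightarrow> real"
  assumes a: "0 < \<alpha>" "\<alpha> < 1" and G[measurable]: "G \<in> borel_measurable borel"
    and GB: "\<And>p. \<bar>G p\<bar> \<le> B" and L: "0 \<le> L"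
    and Glip: "\<And>p q. p \<in> diagonal_strip \<delta> \<Longrightarrow> q \<in> diagonal_strip \<delta> \<Longrightarrow> \<bar>G p - G q\<bar> \<le> L * dist p q"
    and pts: "(t, y) \<in> diagonal_strip \<delta>" "(t', y') \<in> diagonal_strip \<delta>"
  shows "\<bar>abel_average \<alpha> G t y - abel_average \<alpha> G t' y'\<bar>
    \<le> Beta \<alpha> (1 - \<alpha>) * (L * (\<bar>t - t'\<bar> + 2 * \<bar>y - y'\<bar>))"
proof -
  define g where "g = (\<lambda>u. indicator {0<..<1} u * (G (t + (y - t) * u, y) - G (t' + (y' - t') * u, y')))"
  have gB: "\<bar>g u\<bar> \<le> L * (\<bar>t - t'\<bar> + 2 * \<bar>y - y'\<bar>)" for u
  proof (cases "0 < u \<and> u < 1")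
    case True
    then have "(t + (y - t) * u, y) \<in> diagonal_strip \<delta>" "(t' + (y' - t') * u, y') \<in> diagonal_strip \<delta>"
      using convex_combination_in_diagonal_strip[OF pts(1)] convex_combination_in_diagonal_strip[OF pts(2)]
      by blast+
    then have "\<bar>g u\<bar> \<le> L * dist (t + (y - t) * u, y) (t' + (y' - t') * u, y')"
      using Glip True by (simp add: g_def)
    also have "\<dots> \<le> L * (\<bar>t - t'\<bar> + 2 * \<bar>y - y'\<bar>)"
      using dist_convex_combinations_le[of u t y t' y'] True L by (intro mult_left_mono) auto
    finally show ?thesis .
  qed (use L in \<open>simp add: g_def\<close>)
  have gi: "integrable lborel (\<lambda>u. indicator {0<..<1} u * beta_weight \<alpha> u * G (\<tau> + (\<eta> - \<tau>) * u, \<eta>))"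
    for \<tau> \<eta> using integrable_beta_weight_times_bounded[OF a _ GB] by simp
  have "abel_average \<alpha> G t y - abel_average \<alpha> G t' y'
      = (\<integral>u. indicator {0<..<1} u * beta_weight \<alpha> u * g u \<partial>lborel)"
    unfolding abel_average_def Bochner_Integration.integral_diff[OF gi gi, symmetric]
    by (rule Bochner_Integration.integral_cong) (auto simp: g_def indicator_def algebra_simps)
  then show ?thesis
    using abs_integral_beta_weight_times_bounded_le[OF a _ gB] by (simp add: g_def mult.commute)
qed

lemma lipschitz_on_abs_diff_le:
  fixes K :: "'a::metric_space \<Rightarrow> real"
  assumes "L-lipschitz_on S K" "p \<in> S" "q \<in> S"
  shows "\<bar>K p - K q\<bar> \<le> L * dist p q"
  using lipschitz_onD[OF assms] by (simp add: dist_real_def)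

lemma negligible_nonzero_of_regular_equation:
  fixes K :: "real \<times> real \<Rightarrow> real" and h :: "real \<Rightarrow> real"
  assumes Klip: "L-lipschitz_on (diagonal_strip \<delta>) K"
    and Kdiag: "\<And>x. x \<in> {a..s} \<Longrightarrow> c \<le> \<bar>K (x, x)\<bar>" and c: "0 < c"
    and as: "0 \<le> a" "a < s" "s \<le> 1" "s - a < \<delta>" and small: "2 * L * (s - a) < c"
    and hi: "h absolutely_integrable_on {a..s}" and N1: "negligible N1"
    and J0: "\<And>x. x \<in> {a..s} - N1 \<Longrightarrow> integral {x..s} (\<lambda>y. K (x, y) * h y) = 0"
  shows "negligible {y \<in> {a..s}. h y \<noteq> 0}"
proof (rule negligible_nonzero_of_kernel_equation[where M = "\<lambda>t y. K (t, y)", OF as(2) hi _ _ _ _ c _ small N1])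
  have in_strip: "(t, y) \<in> diagonal_strip \<delta>" if "a \<le> t" "t \<le> y" "y \<le> s" for t y
    using that as by simp
  show "continuous_on {t..s} (\<lambda>y. K (t, y))" if "t \<in> {a..s}" for t
    by (rule continuous_on_compose2[OF lipschitz_on_continuous_on[OF Klip], of _ "\<lambda>y. (t, y)"])
      (use that in_strip in \<open>auto intro!: continuous_intros\<close>)
  show "\<bar>K (t, y) - K (t', y)\<bar> \<le> L * (t' - t)"
    if "a \<le> t" "t \<le> t'" "t' \<le> y" "y \<le> s" for t t' y
    using lipschitz_on_abs_diff_le[OF Klip in_strip in_strip, of t y t' y] that
    by (simp add: dist_Pair_Pair dist_real_def)
  show "\<bar>K (t, y) - K (t, t)\<bar> \<le> L * (y - t)"
    if "a \<le> t" "t \<le> y" "y \<le> s" for t y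
    using lipschitz_on_abs_diff_le[OF Klip in_strip in_strip, of t y t t] that
    by (simp add: dist_Pair_Pair dist_real_def)
qed (use Kdiag J0 lipschitz_on_nonneg[OF Klip] in auto)

lemma negligible_nonzero_of_bounded_weakly_singular_equation:
  fixes G :: "real \<times> real \<Rightarrow> real" and h :: "real \<Rightarrow> real"
  assumes a: "0 < \<alpha>" "\<alpha> < 1"
    and G: "G \<in> borel_measurable borel" and GB: "\<And>p. \<bar>G p\<bar> \<le> B" and L: "0 \<le> L"
    and Glip: "\<And>p q. p \<in> diagonal_strip \<delta> \<Longrightarrow> q \<in> diagonal_strip \<delta> \<Longrightarrow> \<bar>G p - G q\<bar> \<le> L * dist p q"
    and Gdiag: "\<And>x. x \<in> {a..s} \<Longrightarrow> c \<le> \<bar>G (x, x)\<bar>" and c: "0 < c"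
    and as: "0 \<le> a" "a < s" "s \<le> 1" "s - a < \<delta>" and small: "4 * L * (s - a) < c"
    and hi: "h absolutely_integrable_on {a..s}" and N1: "negligible N1"
    and J0: "\<And>x. x \<in> {a..s} - N1 \<Longrightarrow> integral {x..s} (\<lambda>y. (y - x) powr (- \<alpha>) * G (x, y) * h y) = 0"
  shows "negligible {y \<in> {a..s}. h y \<noteq> 0}"
proof -
  have in_strip: "(t, y) \<in> diagonal_strip \<delta>" if "a \<le> t" "t \<le> y" "y \<le> s" for t y
    using that as by simp
  let ?\<beta> = "Beta \<alpha> (1 - \<alpha>)"
  have \<beta>0: "0 < ?\<beta>" using Beta_complement_pos[OF a] .
  define M where "M = abel_average \<alpha> G"
  have ME: "\<bar>M t y - M t' y'\<bar> \<le> ?\<beta> * (L * (\<bar>t - t'\<bar> + 2 * \<bar>y - y'\<bar>))"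
    if "a \<le> t" "t \<le> y" "y \<le> s" "a \<le> t'" "t' \<le> y'" "y' \<le> s" for t y t' y'
    unfolding M_def
    by (rule abel_average_diff_le[OF a G GB L Glip in_strip in_strip]) (use that in auto)
  show ?thesis
  proof (rule negligible_nonzero_of_kernel_equation[OF as(2) hi,
        where M = M and L = "2 * ?\<beta> * L" and c = "?\<beta> * c" and N = N1])
    fix t assume t: "t \<in> {a..s}"
    show "continuous_on {t..s} (M t)"
    proof (rule lipschitz_on_continuous_on[OF lipschitz_onI])
      fix y y' assume "y \<in> {t..s}" "y' \<in> {t..s}"
      then have "\<bar>M t y - M t y'\<bar> \<le> ?\<beta> * (L * (\<bar>t - t\<bar> + 2 * \<bar>y - y'\<bar>))"
        using t by (intro ME) auto
      then show "dist (M t y) (M t y') \<le> 2 * ?\<beta> * L * dist y y'"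
        by (simp add: dist_real_def algebra_simps)
    qed (use \<beta>0 L in simp)
    show "?\<beta> * c \<le> \<bar>M t t\<bar>"
      using Gdiag[OF t] \<beta>0 by (simp add: M_def abel_average_diagonal[OF a] abs_mult)
  next
    fix t assume "t \<in> {a..s} - N1"
    then show "integral {t..s} (\<lambda>y. M t y * h y) = 0"
      unfolding M_def by (intro integral_abel_average_times_eq_zero[OF a G GB hi _ N1 J0]) auto
  next
    fix t t' y assume "a \<le> t" "t \<le> t'" "t' \<le> y" "y \<le> s"
    then show "\<bar>M t y - M t' y\<bar> \<le> 2 * ?\<beta> * L * (t' - t)"
      using ME[of t y t' y] \<beta>0 L by (simp add: mult_right_mono)
  next
    fix t y assume "a \<le> t" "t \<le> y" "y \<le> s"
    then show "\<bar>M t y - M t t\<bar> \<le> 2 * ?\<beta> * L * (y - t)"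
      using ME[of t y t t] by (simp add: algebra_simps)
  next
    show "2 * (2 * ?\<beta> * L) * (s - a) < ?\<beta> * c"
      using mult_strict_left_mono[OF small \<beta>0] by (simp add: algebra_simps)
  qed (use \<beta>0 c L N1 in auto)
qed

text \<open>Extending \<open>K\<close> by zero off the strip keeps it bounded and Borel, and changes neither the
  equation nor the Lipschitz estimates, which only involve points of the strip.\<close>
lemma negligible_nonzero_of_weakly_singular_equation:
  fixes K :: "real \<times> real \<Rightarrow> real" and h :: "real \<Rightarrow> real"
  assumes a: "0 < \<alpha>" "\<alpha> < 1"
    and Klip: "L-lipschitz_on (diagonal_strip \<delta>) K"
    and KB: "\<And>p. p \<in> diagonal_strip \<delta> \<Longrightarrow> \<bar>K p\<bar> \<le> B"
    and Kdiag: "\<And>x. x \<in> {a..s} \<Longrightarrow> c \<le> \<bar>K (x, x)\<bar>" and c: "0 < c"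
    and as: "0 \<le> a" "a < s" "s \<le> 1" "s - a < \<delta>" and small: "4 * L * (s - a) < c"
    and hi: "h absolutely_integrable_on {a..s}" and N1: "negligible N1"
    and J0: "\<And>x. x \<in> {a..s} - N1 \<Longrightarrow> integral {x..s} (\<lambda>y. (y - x) powr (- \<alpha>) * K (x, y) * h y) = 0"
  shows "negligible {y \<in> {a..s}. h y \<noteq> 0}"
proof -
  have in_strip: "(t, y) \<in> diagonal_strip \<delta>" if "a \<le> t" "t \<le> y" "y \<le> s" for t y
    using that as by simp
  define Kd where "Kd = (\<lambda>p. indicator (diagonal_strip \<delta>) p * K p)"
  have KdK: "Kd p = K p" if "p \<in> diagonal_strip \<delta>" for p
    using that by (simp add: Kd_def)
  show ?thesis
  proof (rule negligible_nonzero_of_bounded_weakly_singular_equation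
      [OF a _ _ lipschitz_on_nonneg[OF Klip] _ _ c as small hi N1])
    show "Kd \<in> borel_measurable borel"
      using borel_measurable_continuous_on_indicator[OF sets_borel_diagonal_strip
          lipschitz_on_continuous_on[OF Klip]]
      unfolding Kd_def by simp
    show "\<bar>Kd p\<bar> \<le> B" for p
      using KB[of p] KB[of "(a, a)"] as by (auto simp: Kd_def indicator_def)
    show "\<bar>Kd p - Kd q\<bar> \<le> L * dist p q"
      if "p \<in> diagonal_strip \<delta>" "q \<in> diagonal_strip \<delta>" for p q
      using lipschitz_on_abs_diff_le[OF Klip that] KdK[OF that(1)] KdK[OF that(2)] by simp
    show "c \<le> \<bar>Kd (x, x)\<bar>" if "x \<in> {a..s}" for x
      using Kdiag[OF that] KdK[OF in_strip, of x x] that by simp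
    show "integral {x..s} (\<lambda>y. (y - x) powr (- \<alpha>) * Kd (x, y) * h y) = 0"
      if "x \<in> {a..s} - N1" for x
    proof -
      have "integral {x..s} (\<lambda>y. (y - x) powr (- \<alpha>) * Kd (x, y) * h y)
          = integral {x..s} (\<lambda>y. (y - x) powr (- \<alpha>) * K (x, y) * h y)"
        by (rule integral_cong) (use that KdK[OF in_strip, of x] in auto)
      then show ?thesis using J0[OF that] by simp
    qed
  qed
qed

lemma negligible_nonzero_of_abel_equation:
  fixes K :: "real \<times> real \<Rightarrow> real" and h :: "real \<Rightarrow> real"
  assumes alpha: "0 \<le> \<alpha>" "\<alpha> < 1"
    and Klip: "L-lipschitz_on (diagonal_strip \<delta>) K"
    and KB: "\<And>p. p \<in> diagonal_strip \<delta> \<Longrightarrow> \<bar>K p\<bar> \<le> B"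
    and Kdiag: "\<And>x. x \<in> {a..s} \<Longrightarrow> c \<le> \<bar>K (x, x)\<bar>" and c: "0 < c"
    and as: "0 \<le> a" "a < s" "s \<le> 1" "s - a < \<delta>" and small: "4 * L * (s - a) < c"
    and hi: "h absolutely_integrable_on {a..s}" and N1: "negligible N1"
    and J0: "\<And>x. x \<in> {a..s} - N1 \<Longrightarrow> integral {x..s} (\<lambda>y. (y - x) powr (- \<alpha>) * K (x, y) * h y) = 0"
  shows "negligible {y \<in> {a..s}. h y \<noteq> 0}"
proof (cases "\<alpha> = 0")
  case True
  have "integral {x..s} (\<lambda>y. K (x, y) * h y) = 0" if "x \<in> {a..s} - N1" for x
  proof -
    have "integral {x..s} (\<lambda>y. K (x, y) * h y) = integral {x..s} (\<lambda>y. (y - x) powr (- \<alpha>) * K (x, y) * h y)"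
      by (rule integral_spike[of "{x}"]) (use True in auto)
    then show ?thesis using J0[OF that] by simp
  qed
  moreover have "2 * L * (s - a) < c"
    using small lipschitz_on_nonneg[OF Klip] as mult_nonneg_nonneg[of L "s - a"] by linarith
  ultimately show ?thesis
    using negligible_nonzero_of_regular_equation[OF Klip Kdiag c as _ hi N1] by blast
next
  case False
  with alpha have "0 < \<alpha>" by simp
  then show ?thesis
    using negligible_nonzero_of_weakly_singular_equation[OF _ alpha(2) Klip KB Kdiag c as small hi N1 J0]
    by blast
qed

lemma diagonal01_subset_Delta: "diagonal01 \<subseteq> Delta"
  by (auto simp: diagonal01_def Delta_def)

lemma diagonal_strip_subset_neighbourhood:
  assumes U: "open U" "diagonal01 \<subseteq> U"
  obtains \<delta> where "0 < \<delta>" "diagonal_strip \<delta> \<subseteq> U \<inter> Delta"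
proof -
  have "diagonal01 = (\<lambda>x. (x, x)) ` {0..1}" by (auto simp: diagonal01_def)
  moreover have "compact ((\<lambda>x::real. (x, x)) ` {0..1})"
    by (intro compact_continuous_image continuous_intros) auto
  ultimately have "compact diagonal01" by simp
  then obtain \<delta> where \<delta>: "0 < \<delta>" and \<delta>U: "(\<Union>x\<in>diagonal01. ball x \<delta>) \<subseteq> U"
    using compact_subset_open_imp_ball_epsilon_subset[OF _ U] by blast
  have "(x, y) \<in> U" if xy: "(x, y) \<in> diagonal_strip \<delta>" for x y
  proof -
    have "(y, y) \<in> diagonal01" using xy by (simp add: diagonal01_def)
    moreover have "(x, y) \<in> ball (y, y) \<delta>" using xy by (simp add: dist_Pair_Pair dist_real_def)
    ultimately show ?thesis using \<delta>U by blast
  qed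
  then have "diagonal_strip \<delta> \<subseteq> U \<inter> Delta"
    using diagonal_strip_subset_Delta by auto
  with \<delta> that show ?thesis by blast
qed

lemma diagonal_abs_lower_bound:
  fixes K :: "real \<times> real \<Rightarrow> real"
  assumes "continuous_on diagonal01 K" "\<forall>x\<in>{0..1}. K (x, x) \<noteq> 0"
  obtains c where "0 < c" "\<And>x. x \<in> {0..1} \<Longrightarrow> c \<le> \<bar>K (x, x)\<bar>"
proof -
  have sub: "(\<lambda>x::real. (x, x)) ` {0..1} \<subseteq> diagonal01" by (auto simp: diagonal01_def)
  have "continuous_on {0..1} (\<lambda>x::real. (x, x))" by (intro continuous_intros)
  then have "continuous_on {0..1} (\<lambda>x. K (x, x))"
    using continuous_on_compose2[OF assms(1) _ sub] by blast
  then have "continuous_on {0..1} (\<lambda>x. \<bar>K (x, x)\<bar>)" by (intro continuous_intros)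
  then obtain x0 where x0: "x0 \<in> {0..1}" "\<And>y. y \<in> {0..1} \<Longrightarrow> \<bar>K (x0, x0)\<bar> \<le> \<bar>K (y, y)\<bar>"
    using continuous_attains_inf[OF compact_Icc _ \<open>continuous_on {0..1} (\<lambda>x. \<bar>K (x, x)\<bar>)\<close>] by auto
  have "0 < \<bar>K (x0, x0)\<bar>" using assms(2) x0(1) by simp
  then show ?thesis using x0(2) that by blast
qed

lemma near_diagonal_constants:
  fixes K :: "real \<times> real \<Rightarrow> real"
  assumes K_diag: "\<forall>x\<in>{0..1}. K (x, x) \<noteq> 0"
    and U: "open U" "diagonal01 \<subseteq> U" and Klip: "L-lipschitz_on (U \<inter> Delta) K"
  obtains \<delta> c where "0 < \<delta>" "L-lipschitz_on (diagonal_strip \<delta>) K" "diagonal_strip \<delta> \<subseteq> Delta"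
    "0 < c" "\<And>x. x \<in> {0..1} \<Longrightarrow> c \<le> \<bar>K (x, x)\<bar>"
proof -
  obtain \<delta> where \<delta>: "0 < \<delta>" and strip: "diagonal_strip \<delta> \<subseteq> U \<inter> Delta"
    using diagonal_strip_subset_neighbourhood[OF U] by blast
  have "continuous_on diagonal01 K"
    using continuous_on_subset[OF lipschitz_on_continuous_on[OF Klip]] U(2) diagonal01_subset_Delta
    by blast
  then obtain c where "0 < c" "\<And>x. x \<in> {0..1} \<Longrightarrow> c \<le> \<bar>K (x, x)\<bar>"
    using diagonal_abs_lower_bound K_diag by blast
  with \<delta> lipschitz_on_subset[OF Klip strip] strip that show ?thesis by blast
qed

section \<open>Integrability of the integrand of \<open>I\<^sup>\<alpha>\<^sub>K f\<close>\<close>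

lemma integrable_powr_neg_on_unit:
  fixes \<alpha> :: real
  assumes "0 \<le> \<alpha>" "\<alpha> < 1"
  shows "integrable lborel (\<lambda>v. indicator {0<..1} v * v powr (- \<alpha>))"
proof -
  have "(\<lambda>v::real. v powr (- \<alpha>)) absolutely_integrable_on {0<..1}"
    using assms by (intro nonnegative_absolutely_integrable_1 integrable_on_powr_from_0') auto
  then have "integrable lebesgue (\<lambda>v. indicator {0<..1} v * v powr (- \<alpha>))"
    unfolding set_integrable_def by simp
  moreover have "(\<lambda>v. indicator {0<..1} v * v powr (- \<alpha>)) \<in> borel_measurable lborel"
    by measurable
  ultimately show ?thesis using integrable_completion by blast
qed

lemma
  fixes g :: "real \<Rightarrow> real" and \<alpha> y :: real
  assumes a: "0 \<le> \<alpha>" "\<alpha> < 1" and g[measurable]: "g \<in> borel_measurable borel"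
    and gB: "\<And>x. \<bar>g x\<bar> \<le> B" and y: "y \<le> 1"
  shows integrable_powr_neg_times_bounded:
      "integrable lborel (\<lambda>x. indicator {0..<y} x * ((y - x) powr (- \<alpha>) * g x))"
    and integral_abs_powr_neg_times_bounded_le:
      "(\<integral>x. \<bar>indicator {0..<y} x * ((y - x) powr (- \<alpha>) * g x)\<bar> \<partial>lborel)
        \<le> B * (\<integral>v. indicator {0<..1} v * v powr (- \<alpha>) \<partial>lborel)"
proof -
  define F where "F = (\<lambda>x. indicator {0..<y} x * ((y - x) powr (- \<alpha>) * g x))"
  have reflect: "F (y - v) = indicator {0<..y} v * (v powr (- \<alpha>) * g (y - v))" for v
    unfolding F_def by (auto simp: indicator_def)
  have pi: "integrable lborel (\<lambda>v. B * (indicator {0<..1} v * v powr (- \<alpha>)))"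
    using integrable_powr_neg_on_unit[OF a] by simp
  have bnd: "\<bar>F (y - v)\<bar> \<le> B * (indicator {0<..1} v * v powr (- \<alpha>))" for v
  proof (cases "0 < v \<and> v \<le> y")
    case True
    then have "\<bar>F (y - v)\<bar> = v powr (- \<alpha>) * \<bar>g (y - v)\<bar>"
      by (simp add: reflect abs_mult)
    also have "\<dots> \<le> v powr (- \<alpha>) * B" using gB by (simp add: mult_left_mono)
    finally show ?thesis using True y by (simp add: mult.commute)
  next
    case False
    then show ?thesis using gB[of 0] by (auto simp: reflect indicator_def)
  qed
  have i: "integrable lborel (\<lambda>v. F (y - v))"
    by (rule Bochner_Integration.integrable_bound[OF pi])
      (use bnd in \<open>auto simp: F_def intro!: AE_I2 order.trans[OF _ abs_ge_self]\<close>)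
  then show "integrable lborel F"
    using lborel_integrable_real_affine_iff[of "-1" F y] by simp
  have "(\<integral>x. \<bar>F x\<bar> \<partial>lborel) = (\<integral>v. \<bar>F (y - v)\<bar> \<partial>lborel)"
    using lborel_integral_real_affine[of "-1" "\<lambda>x. \<bar>F x\<bar>" y] by simp
  also have "\<dots> \<le> (\<integral>v. B * (indicator {0<..1} v * v powr (- \<alpha>)) \<partial>lborel)"
    by (rule integral_mono[OF _ pi]) (use i bnd in auto)
  also have "\<dots> = B * (\<integral>v. indicator {0<..1} v * v powr (- \<alpha>) \<partial>lborel)" by simp
  finally show "(\<integral>x. \<bar>F x\<bar> \<partial>lborel) \<le> B * (\<integral>v. indicator {0<..1} v * v powr (- \<alpha>) \<partial>lborel)" .
qed

lemma closed_Delta: "closed Delta"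
proof -
  have "Delta = {p. 0 \<le> fst p \<and> fst p \<le> snd p \<and> snd p \<le> 1}" by (auto simp: Delta_def)
  moreover have "closed {p::real \<times> real. 0 \<le> fst p \<and> fst p \<le> snd p \<and> snd p \<le> 1}"
    by (intro closed_Collect_conj closed_Collect_le continuous_intros)
  ultimately show ?thesis by simp
qed

lemma bounded_borel_representative_on_Delta:
  fixes K :: "real \<times> real \<Rightarrow> real"
  assumes Km: "K \<in> borel_measurable (lebesgue_on Delta)" and KB: "\<And>p. p \<in> Delta \<Longrightarrow> \<bar>K p\<bar> \<le> B"
  obtains K2 where "K2 \<in> borel_measurable borel" "\<And>p. \<bar>K2 p\<bar> \<le> B"
    "AE p in lborel. indicator Delta p * K p = K2 p"
proof -
  have B0: "0 \<le> B" using KB[of "(0, 0)"] by (auto simp: Delta_def)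
  define K0 where "K0 = (\<lambda>p. indicator Delta p * K p)"
  have "K0 \<in> borel_measurable lebesgue"
    using borel_measurable_restrict_space_iff[of Delta lebesgue K] Km closed_Delta
    unfolding K0_def by simp
  then obtain K' where K'm: "K' \<in> borel_measurable lborel" and K'ae: "AE p in lborel. K0 p = K' p"
    using completion_ex_borel_measurable_real by blast
  define K2 where "K2 = (\<lambda>p. max (- B) (min B (K' p)))"
  have "K2 \<in> borel_measurable borel" using K'm unfolding K2_def by (simp add: measurable_lborel1)
  moreover have "\<bar>K2 p\<bar> \<le> B" for p using B0 unfolding K2_def by auto
  moreover have "AE p in lborel. K0 p = K2 p"
    using K'ae
  proof eventually_elim
    case (elim p)
    then show ?case using KB[of p] B0 unfolding K2_def K0_def by (cases "p \<in> Delta") auto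
  qed
  ultimately show ?thesis using that unfolding K0_def by blast
qed

text \<open>Tonelli: the iterated integral of the absolute value is at most
  \<open>B \<cdot> \<integral>\<^sub>0\<^sup>1 v powr (- \<alpha>) dv \<cdot> \<parallel>f\<parallel>\<^sub>1\<close>.\<close>
lemma integrable_singular_kernel_product:
  fixes K :: "real \<times> real \<Rightarrow> real" and f :: "real \<Rightarrow> real"
  assumes a: "0 \<le> \<alpha>" "\<alpha> < 1" and K[measurable]: "K \<in> borel_measurable borel"
    and KB: "\<And>p. \<bar>K p\<bar> \<le> B"
    and f[measurable]: "f \<in> borel_measurable borel" and fi: "integrable lborel f"
  shows "integrable (lborel \<Otimes>\<^sub>M lborel)
    (\<lambda>(y, x). indicator {0..1} y * f y * (indicator {0..<y} x * ((y - x) powr (- \<alpha>) * K (x, y))))"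
proof -
  define C where "C = (\<integral>v. indicator {0<..1} v * v powr (- \<alpha>) \<partial>lborel)"
  define \<Psi> where "\<Psi> = (\<lambda>y x. indicator {0..1} y * f y * (indicator {0..<y} x * ((y - x) powr (- \<alpha>) * K (x, y))))"
  have \<Psi>m: "(\<lambda>(y, x). \<Psi> y x) \<in> borel_measurable (lborel \<Otimes>\<^sub>M lborel)"
    unfolding \<Psi>_def indicator_def atLeastLessThan_iff atLeastAtMost_iff case_prod_beta
    by measurable
  have B0: "0 \<le> B" using KB[of "(0, 0)"] by simp
  have C0: "0 \<le> C" unfolding C_def by (intro integral_nonneg_AE AE_I2) (simp add: indicator_def)
  have KBs: "\<bar>K (x, y)\<bar> \<le> B" for x y using KB .
  have int1: "integrable lborel (\<lambda>y. \<integral>x. norm (\<Psi> y x) \<partial>lborel)"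
  proof (rule Bochner_Integration.integrable_bound)
    show "integrable lborel (\<lambda>y. B * C * f y)" using fi by simp
    have "(\<lambda>(y, x). norm (\<Psi> y x)) \<in> borel_measurable (lborel \<Otimes>\<^sub>M lborel)"
      using measurable_compose[OF \<Psi>m borel_measurable_norm] by (simp add: case_prod_beta)
    then show "(\<lambda>y. \<integral>x. norm (\<Psi> y x) \<partial>lborel) \<in> borel_measurable lborel"
      by (rule lborel.borel_measurable_lebesgue_integral)
    show "AE y in lborel. norm (\<integral>x. norm (\<Psi> y x) \<partial>lborel) \<le> norm (B * C * f y)"
    proof (rule AE_I2)
      fix y
      let ?I = "\<integral>x. \<bar>indicator {0..<y} x * ((y - x) powr (- \<alpha>) * K (x, y))\<bar> \<partial>lborel"
      have "(\<integral>x. norm (\<Psi> y x) \<partial>lborel) = (indicator {0..1} y * \<bar>f y\<bar>) * ?I"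
        unfolding \<Psi>_def by (simp add: abs_mult)
      moreover have "0 \<le> ?I" by simp
      moreover have "?I \<le> B * C" if "y \<le> 1"
        unfolding C_def
        by (rule integral_abs_powr_neg_times_bounded_le[OF a _ KBs that]) measurable
      ultimately show "norm (\<integral>x. norm (\<Psi> y x) \<partial>lborel) \<le> norm (B * C * f y)"
        using B0 C0 by (auto simp: indicator_def abs_mult mult_left_mono mult.commute)
    qed
  qed
  have int2: "AE y in lborel. integrable lborel (\<Psi> y)"
  proof (rule AE_I2)
    fix y show "integrable lborel (\<Psi> y)"
    proof (cases "0 \<le> y \<and> y \<le> 1")
      case True
      have "integrable lborel (\<lambda>x. indicator {0..<y} x * ((y - x) powr (- \<alpha>) * K (x, y)))"
        by (rule integrable_powr_neg_times_bounded[OF a _ KBs]) (use True in simp_all)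
      then show ?thesis unfolding \<Psi>_def by simp
    qed (simp add: \<Psi>_def indicator_def)
  qed
  show ?thesis
    using lborel_pair.Fubini_integrable[OF \<Psi>m] int1 int2 unfolding \<Psi>_def by simp
qed

lemma AE_integrable_singular_sections:
  fixes K :: "real \<times> real \<Rightarrow> real" and f :: "real \<Rightarrow> real"
  assumes a: "0 \<le> \<alpha>" "\<alpha> < 1" and K[measurable]: "K \<in> borel_measurable borel"
    and KB: "\<And>p. \<bar>K p\<bar> \<le> B"
    and f[measurable]: "f \<in> borel_measurable borel" and fi: "integrable lborel f"
  shows "AE x in lborel. integrable lborel
    (\<lambda>y. indicator {0..1} y * f y * (indicator {0..<y} x * ((y - x) powr (- \<alpha>) * K (x, y))))"
proof -
  let ?\<Psi> = "\<lambda>y x. indicator {0..1} y * f y * (indicator {0..<y} x * ((y - x) powr (- \<alpha>) * K (x, y)))"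
  have "integrable (lborel \<Otimes>\<^sub>M lborel) (\<lambda>(x, y). ?\<Psi> y x)"
    using lborel_pair.integrable_product_swap_iff[of "\<lambda>(y, x). ?\<Psi> y x"]
      integrable_singular_kernel_product[OF a K KB f fi] by simp
  from lborel_pair.AE_integrable_fst'[OF this] show ?thesis by simp
qed

text \<open>\<open>IK\<close> is a Bochner integral, which is \<open>0\<close> for non-integrable integrands, so \<open>I\<^sup>\<alpha>\<^sub>K\<close> is only
  known to be linear at the points provided here.\<close>
lemma set_integrable_IK_integrand_ae:
  fixes K :: "real \<times> real \<Rightarrow> real" and f :: "real \<Rightarrow> real"
  assumes a: "0 \<le> \<alpha>" "\<alpha> < 1"
    and Km: "K \<in> borel_measurable (lebesgue_on Delta)" and KB: "\<And>p. p \<in> Delta \<Longrightarrow> \<bar>K p\<bar> \<le> B"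
    and fi: "f absolutely_integrable_on {0..1}"
  obtains N where "negligible N"
    "\<And>x. x \<in> {0..1} - N \<Longrightarrow> set_integrable lebesgue {x..1} (\<lambda>y. (y - x) powr (- \<alpha>) * K (x, y) * f y)"
proof -
  obtain K2 where K2m: "K2 \<in> borel_measurable borel" and K2B: "\<And>p. \<bar>K2 p\<bar> \<le> B"
    and K2ae: "AE p in lborel. indicator Delta p * K p = K2 p"
    using bounded_borel_representative_on_Delta[OF Km KB] by blast
  obtain fb Nf where fbm: "fb \<in> borel_measurable borel" and fbi: "integrable lborel fb"
    and Nf: "negligible Nf" and fbf: "\<And>y. y \<in> {0..1} - Nf \<Longrightarrow> fb y = f y"
    using absolutely_integrable_on_borel_representative[OF fi] by blast
  have "AE p in lborel \<Otimes>\<^sub>M lborel. indicator Delta p * K p = K2 p"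
    unfolding lborel_prod by (rule K2ae)
  then have aeK: "AE x in lborel. AE y in lborel. indicator Delta (x, y) * K (x, y) = K2 (x, y)"
    by (rule lborel_pair.AE_pair)
  have "AE x in lborel. x \<in> {0..1} \<longrightarrow>
      set_integrable lebesgue {x..1} (\<lambda>y. (y - x) powr (- \<alpha>) * K (x, y) * f y)"
    using AE_integrable_singular_sections[OF a K2m K2B fbm fbi] aeK
  proof eventually_elim
    case (elim x)
    show ?case
    proof
      assume x: "x \<in> {0..1}"
      define \<Psi> where "\<Psi> = (\<lambda>y. indicator {0..1} y * fb y *
          (indicator {0..<y} x * ((y - x) powr (- \<alpha>) * K2 (x, y))))"
      have "AE y in lborel. \<Psi> y = indicator {x..1} y *\<^sub>R ((y - x) powr (- \<alpha>) * K (x, y) * f y)"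
        using elim(2) AE_lborel_not_in_negligible[OF Nf]
      proof eventually_elim
        case (elim y)
        show ?case
        proof (cases "x < y \<and> y \<le> 1")
          case True
          then have "(x, y) \<in> Delta" using x by (auto simp: Delta_def)
          then have "K2 (x, y) = K (x, y)" using elim(1) by simp
          moreover have "fb y = f y" using fbf[of y] elim(2) True x by simp
          ultimately show ?thesis using True x by (simp add: \<Psi>_def)
        next
          case False
          then show ?thesis by (auto simp: \<Psi>_def indicator_def)
        qed
      qed
      moreover have "integrable lborel \<Psi>" using elim(1) unfolding \<Psi>_def .
      ultimately show "set_integrable lebesgue {x..1} (\<lambda>y. (y - x) powr (- \<alpha>) * K (x, y) * f y)"
        by (rule set_integrable_lebesgue_of_AE_eq_integrable_lborel)
    qed
  qed
  then obtain N where "negligible N"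
    "\<And>x. x \<notin> N \<Longrightarrow> x \<in> {0..1} \<longrightarrow> set_integrable lebesgue {x..1} (\<lambda>y. (y - x) powr (- \<alpha>) * K (x, y) * f y)"
    by (rule AE_lborel_obtain_negligible) blast
  then show ?thesis using that by blast
qed

lemma integral_IK_integrand_diff_eq_zero:
  fixes K :: "real \<times> real \<Rightarrow> real" and f g :: "real \<Rightarrow> real"
  assumes x: "x < 1" and eq: "IK \<alpha> K f x = IK \<alpha> K g x"
    and sf: "set_integrable lebesgue {x..1} (\<lambda>y. (y - x) powr (- \<alpha>) * K (x, y) * f y)"
    and sg: "set_integrable lebesgue {x..1} (\<lambda>y. (y - x) powr (- \<alpha>) * K (x, y) * g y)"
  shows "integral {x..1} (\<lambda>y. (y - x) powr (- \<alpha>) * K (x, y) * (f y - g y)) = 0"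
proof -
  have "integral {x..1} (\<lambda>y. (y - x) powr (- \<alpha>) * K (x, y) * f y)
      = integral {x..1} (\<lambda>y. (y - x) powr (- \<alpha>) * K (x, y) * g y)"
    using eq x unfolding IK_def
    by (simp add: set_lebesgue_integral_eq_integral(2)[OF sf] set_lebesgue_integral_eq_integral(2)[OF sg])
  then show ?thesis
    using integral_diff[OF set_lebesgue_integral_eq_integral(1)[OF sf] set_lebesgue_integral_eq_integral(1)[OF sg]]
    by (simp add: algebra_simps)
qed

lemma integral_IK_integrand_diff_eq_zero_ae:
  fixes K :: "real \<times> real \<Rightarrow> real" and f g :: "real \<Rightarrow> real"
  assumes alpha: "0 \<le> \<alpha>" "\<alpha> < 1"
    and K_meas: "K \<in> borel_measurable (lebesgue_on Delta)" and KB: "\<And>p. p \<in> Delta \<Longrightarrow> \<bar>K p\<bar> \<le> B"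
    and fi: "f absolutely_integrable_on {0..1}" and gi: "g absolutely_integrable_on {0..1}"
    and r: "0 \<le> r" and eq: "negligible {x \<in> {r..1}. IK \<alpha> K f x \<noteq> IK \<alpha> K g x}"
  obtains N where "negligible N"
    "\<And>x. x \<in> {r..1} - N \<Longrightarrow> integral {x..1} (\<lambda>y. (y - x) powr (- \<alpha>) * K (x, y) * (f y - g y)) = 0"
proof -
  obtain Nf where Nf: "negligible Nf"
    "\<And>x. x \<in> {0..1} - Nf \<Longrightarrow> set_integrable lebesgue {x..1} (\<lambda>y. (y - x) powr (- \<alpha>) * K (x, y) * f y)"
    using set_integrable_IK_integrand_ae[OF alpha K_meas KB fi] by blast
  obtain Ng where Ng: "negligible Ng"
    "\<And>x. x \<in> {0..1} - Ng \<Longrightarrow> set_integrable lebesgue {x..1} (\<lambda>y. (y - x) powr (- \<alpha>) * K (x, y) * g y)"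
    using set_integrable_IK_integrand_ae[OF alpha K_meas KB gi] by blast
  define N where "N = {x \<in> {r..1}. IK \<alpha> K f x \<noteq> IK \<alpha> K g x} \<union> Nf \<union> Ng"
  have "integral {x..1} (\<lambda>y. (y - x) powr (- \<alpha>) * K (x, y) * (f y - g y)) = 0"
    if x: "x \<in> {r..1} - N" for x
  proof (cases "x = 1")
    case False
    then show ?thesis
      using x r Nf(2)[of x] Ng(2)[of x]
      by (intro integral_IK_integrand_diff_eq_zero) (auto simp: N_def)
  qed simp
  moreover have "negligible N" unfolding N_def using eq Nf(1) Ng(1) by auto
  ultimately show ?thesis using that by blast
qed

lemma IK_zero [simp]: "IK \<alpha> K (\<lambda>_. 0) x = 0"
  by (simp add: IK_def)

lemma negligible_diff_of_IK_eq:
  fixes \<alpha> :: real and K :: "real \<times> real \<Rightarrow> real" and f g :: "real \<Rightarrow> real"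
  assumes alpha: "0 \<le> \<alpha>" "\<alpha> < 1"
    and K_meas: "K \<in> borel_measurable (lebesgue_on Delta)"
    and K_bdd: "\<exists>B. \<forall>p\<in>Delta. \<bar>K p\<bar> \<le> B"
    and K_diag: "\<forall>x\<in>{0..1}. K (x, x) \<noteq> 0"
    and K_lip: "\<exists>U L. open U \<and> diagonal01 \<subseteq> U \<and> L-lipschitz_on (U \<inter> Delta) K"
    and fi: "f absolutely_integrable_on {0..1}" and gi: "g absolutely_integrable_on {0..1}"
    and r: "0 \<le> r" "r < 1"
    and eq: "negligible {x \<in> {r..1}. IK \<alpha> K f x \<noteq> IK \<alpha> K g x}"
  shows "negligible {x \<in> {r..1}. f x \<noteq> g x}"
proof -
  obtain B where KB: "\<And>p. p \<in> Delta \<Longrightarrow> \<bar>K p\<bar> \<le> B" using K_bdd by blast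
  obtain U L where U: "open U" "diagonal01 \<subseteq> U" and Klip: "L-lipschitz_on (U \<inter> Delta) K"
    using K_lip by blast
  obtain \<delta> c where \<delta>: "0 < \<delta>" and Klip_strip: "L-lipschitz_on (diagonal_strip \<delta>) K"
    and strip: "diagonal_strip \<delta> \<subseteq> Delta" and c: "0 < c" and Kdiag: "\<And>x. x \<in> {0..1} \<Longrightarrow> c \<le> \<bar>K (x, x)\<bar>"
    using near_diagonal_constants[OF K_diag U Klip] by blast
  have L: "0 \<le> L" using lipschitz_on_nonneg[OF Klip] .
  obtain N where N: "negligible N"
    and J: "\<And>x. x \<in> {r..1} - N \<Longrightarrow> integral {x..1} (\<lambda>y. (y - x) powr (- \<alpha>) * K (x, y) * (f y - g y)) = 0"
    using integral_IK_integrand_diff_eq_zero_ae[OF alpha K_meas KB fi gi r(1) eq] by blast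
  have hi: "(\<lambda>y. f y - g y) absolutely_integrable_on {0..1}" using set_integral_diff(1)[OF fi gi] .
  obtain \<eta> where \<eta>: "0 < \<eta>" "\<eta> < \<delta>" "\<eta> < c / (4 * L + 1)"
    using field_lbound_gt_zero[OF \<delta>, of "c / (4 * L + 1)"] c L by auto
  have "negligible {y \<in> {r..1}. f y - g y \<noteq> 0}"
  proof (rule negligible_by_backward_steps[OF \<eta>(1)])
    fix a s assume as: "r \<le> a" "a < s" "s \<le> 1" "s - a \<le> \<eta>"
      and tail: "negligible {y \<in> {s..1}. f y - g y \<noteq> 0}"
    show "negligible {y \<in> {a..s}. f y - g y \<noteq> 0}"
    proof (rule negligible_nonzero_of_abel_equation[OF alpha Klip_strip _ _ c _ as(2-3) _ _ _ N])
      have "(4 * L + 1) * (s - a) \<le> (4 * L + 1) * \<eta>" using as(4) L by (intro mult_left_mono) auto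
      also have "\<dots> < c" using \<eta>(3) L by (simp add: pos_less_divide_eq mult.commute)
      finally show "4 * L * (s - a) < c" using as(2) by (simp add: algebra_simps)
      show "(\<lambda>y. f y - g y) absolutely_integrable_on {a..s}"
        by (rule absolutely_integrable_on_subinterval[OF hi]) (use as r in auto)
      show "integral {x..s} (\<lambda>y. (y - x) powr (- \<alpha>) * K (x, y) * (f y - g y)) = 0"
        if "x \<in> {a..s} - N" for x
        using integral_eq_of_negligible_tail[OF tail, of x "\<lambda>y. (y - x) powr (- \<alpha>) * K (x, y)"]
          J[of x] that as by auto
    qed (use KB strip Kdiag as r \<eta> in auto)
  qed (use r in auto)
  then show ?thesis by simp
qed

theorem theorem2p9:
  fixes \<alpha> :: real and K :: "real \<times> real \<Rightarrow> real"
  assumes alpha: "0 \<le> \<alpha>" "\<alpha> < 1"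
    and K_meas: "K \<in> borel_measurable (lebesgue_on Delta)"
    and K_bdd: "\<exists>B. \<forall>p\<in>Delta. \<bar>K p\<bar> \<le> B"
    and K_diag: "\<forall>x\<in>{0..1}. K (x, x) \<noteq> 0"
    and K_lip: "\<exists>U L. open U \<and> diagonal01 \<subseteq> U \<and> L-lipschitz_on (U \<inter> Delta) K"
  shows "(\<forall>f r. integrable (lebesgue_on {0..1}) f \<and> 0 \<le> r \<and> r < 1 \<and>
            (AE x in lebesgue_on {r..1}. IK \<alpha> K f x = 0)
            \<longrightarrow> (AE x in lebesgue_on {r..1}. f x = 0))
       \<and> (\<forall>f g. integrable (lebesgue_on {0..1}) f \<and> integrable (lebesgue_on {0..1}) g \<and>
            (AE x in lebesgue_on {0..1}. IK \<alpha> K f x = IK \<alpha> K g x)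
            \<longrightarrow> (AE x in lebesgue_on {0..1}. f x = g x))"
proof -
  note uniqueness = negligible_diff_of_IK_eq[OF alpha K_meas K_bdd K_diag K_lip]
  have Icc: "{a..b} \<in> sets lebesgue" for a b :: real by simp
  note L1 = absolutely_integrable_on_of_integrable_lebesgue_on[OF _ Icc]
  show ?thesis
  proof (intro conjI allI impI; elim conjE)
    fix f :: "real \<Rightarrow> real" and r :: real
    assume "integrable (lebesgue_on {0..1}) f" "0 \<le> r" "r < 1"
      "AE x in lebesgue_on {r..1}. IK \<alpha> K f x = 0"
    then show "AE x in lebesgue_on {r..1}. f x = 0"
      using uniqueness[OF L1 _ , of f "\<lambda>_. 0" r] by (simp add: AE_lebesgue_on_iff_negligible[OF Icc])
  next
    fix f g :: "real \<Rightarrow> real"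
    assume "integrable (lebesgue_on {0..1}) f" "integrable (lebesgue_on {0..1}) g"
      "AE x in lebesgue_on {0..1}. IK \<alpha> K f x = IK \<alpha> K g x"
    then show "AE x in lebesgue_on {0..1}. f x = g x"
      using uniqueness[OF L1 L1, of f g 0] by (simp add: AE_lebesgue_on_iff_negligible[OF Icc])
  qed
qed

end
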